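(* Let $\alpha\ge2$ and let $x_\alpha,\dots,x_1$ be integers such that $x_j=3$ for some $j>1$ and $x_i=2$ for all $i\ne j$. Then: (i) up to isomorphism, exactly one graph realizes $(1,x_\alpha,\dots,x_1)$; (ii) $(1,x_\alpha,\dots,x_1,1)$ is not realizable; (iii) up to isomorphism, exactly one graph 0-realizes $(x_\alpha,\dots,x_1)$; (iv) $(x_\alpha,\dots,x_1,1)$ is not 0-realizable.
   Context: All graphs are finite, nonempty, and reflexive (every vertex has a loop). $N[v]$ is the closed neighborhood of $v$ (including $v$). For distinct $v,w$, $w$ strictly corners $v$ if $N[v]\subsetneq N[w]$; $v$ is then a strict corner. A vertex dominates a set if adjacent to all its vertices. Corner ranking: set $G^{(1)}=G$, $k=1$. If $G^{(k)}$ is a clique, give all its vertices rank $k$ and stop. Else if $G^{(k)}$ has no strict corners, give all its vertices rank $\infty$ and stop. Else give every strict corner of $G^{(k)}$ rank $k$, delete them to get $G^{(k+1)}$ (induced subgraph), increase $k$ and repeat. The corner rank is the largest rank of a vertex; $X_k$ is the set of rank-$k$ vertices; cop-win graphs are exactly those of finite corner rank. A graph of finite corner rank $\beta\ge2$ is of type 1 if some (equivalently every) vertex of rank $\beta$ dominates $V(G^{(\beta-1)})$, and of type 0 otherwise. A vector is a finite list of positive integers; the rank cardinality vector of a graph of corner rank $\beta$ is $(y_\beta,\dots,y_1)$ with $y_k=|X_k|$, and the graph realizes it. A vector is realizable if some cop-win graph realizes it, and a graph 0-realizes a vector if it is a cop-win graph of type 0 realizing it; the vector is then 0-realizable. *)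

theory Defs
  imports Main
begin

definition graph :: "'a set \<Rightarrow> ('a \<times> 'a) set \<Rightarrow> bool" where
  "graph V E \<longleftrightarrow> finite V \<and> V \<noteq> {} \<and> E \<subseteq> V \<times> V \<and> sym E \<and> (\<forall>v\<in>V. (v, v) \<in> E)"

definition nbh :: "('a \<times> 'a) set \<Rightarrow> 'a set \<Rightarrow> 'a \<Rightarrow> 'a set" where
  "nbh E S v = {w \<in> S. (v, w) \<in> E}"

definition is_clique :: "('a \<times> 'a) set \<Rightarrow> 'a set \<Rightarrow> bool" where
  "is_clique E S \<longleftrightarrow> (\<forall>v\<in>S. \<forall>w\<in>S. (v, w) \<in> E)"

definition strict_corners :: "('a \<times> 'a) set \<Rightarrow> 'a set \<Rightarrow> 'a set" where
  "strict_corners E S = {v \<in> S. \<exists>w\<in>S. w \<noteq> v \<and> nbh E S v \<subset> nbh E S w}"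

definition cr_step :: "('a \<times> 'a) set \<Rightarrow> 'a set \<Rightarrow> 'a set" where
  "cr_step E S = (if is_clique E S \<or> strict_corners E S = {} then S else S - strict_corners E S)"

text \<open>remaining E V k is the vertex set of G^(k+1).\<close>
definition remaining :: "'a set \<Rightarrow> ('a \<times> 'a) set \<Rightarrow> nat \<Rightarrow> 'a set" where
  "remaining V E k = (cr_step E ^^ k) V"

text \<open>Cop-win = finite corner rank: the procedure ends with a clique.\<close>
definition cop_win :: "'a set \<Rightarrow> ('a \<times> 'a) set \<Rightarrow> bool" where
  "cop_win V E \<longleftrightarrow> (\<exists>k. is_clique E (remaining V E k))"

text \<open>Corner rank (meaningful for cop-win graphs).\<close>
definition corner_rank :: "'a set \<Rightarrow> ('a \<times> 'a) set \<Rightarrow> nat" where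
  "corner_rank V E = Suc (LEAST k. is_clique E (remaining V E k))"

definition rank_set :: "'a set \<Rightarrow> ('a \<times> 'a) set \<Rightarrow> nat \<Rightarrow> 'a set" where
  "rank_set V E k =
     (if k = 0 \<or> k > corner_rank V E then {}
      else if k = corner_rank V E then remaining V E (k - 1)
      else strict_corners E (remaining V E (k - 1)))"

definition rank_card_vector :: "'a set \<Rightarrow> ('a \<times> 'a) set \<Rightarrow> nat list" where
  "rank_card_vector V E = map (\<lambda>k. card (rank_set V E k)) (rev [1..<Suc (corner_rank V E)])"

definition type1 :: "'a set \<Rightarrow> ('a \<times> 'a) set \<Rightarrow> bool" where
  "type1 V E \<longleftrightarrow> corner_rank V E \<ge> 2 \<and>
     (\<exists>v\<in>rank_set V E (corner_rank V E).
        \<forall>u\<in>remaining V E (corner_rank V E - 2). (v, u) \<in> E)"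

definition type0 :: "'a set \<Rightarrow> ('a \<times> 'a) set \<Rightarrow> bool" where
  "type0 V E \<longleftrightarrow> corner_rank V E \<ge> 2 \<and> \<not> type1 V E"

definition realizes :: "'a set \<Rightarrow> ('a \<times> 'a) set \<Rightarrow> nat list \<Rightarrow> bool" where
  "realizes V E xs \<longleftrightarrow> graph V E \<and> cop_win V E \<and> rank_card_vector V E = xs"

definition zero_realizes :: "'a set \<Rightarrow> ('a \<times> 'a) set \<Rightarrow> nat list \<Rightarrow> bool" where
  "zero_realizes V E xs \<longleftrightarrow> realizes V E xs \<and> type0 V E"

definition graph_iso :: "'a set \<Rightarrow> ('a \<times> 'a) set \<Rightarrow> 'b set \<Rightarrow> ('b \<times> 'b) set \<Rightarrow> bool" where
  "graph_iso V1 E1 V2 E2 \<longleftrightarrow> (\<exists>f. bij_betw f V1 V2 \<and>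
     (\<forall>u\<in>V1. \<forall>v\<in>V1. (u, v) \<in> E1 \<longleftrightarrow> (f u, f v) \<in> E2))"

definition vec_of :: "nat \<Rightarrow> (nat \<Rightarrow> nat) \<Rightarrow> nat list" where
  "vec_of \<alpha> x = map x (rev [1..<Suc \<alpha>])"

end

theory Submission
  imports Defs
begin

text \<open>Read the corner ranking from the top down. A rank of two vertices below a path must attach
  one pendant to each end of the path: an end is no longer a strict corner, so it needs a private
  neighbour among the new corners, and there are only two of them. The rank of three vertices
  attaches twins next to one end, which is forced only together with the rank of two vertices
  below it; this is why \<open>j > 1\<close>. Starting from the single top vertex, or from the top clique in
  the type 0 case, every realization is therefore the path on \<open>2\<alpha> + 1\<close> (resp. \<open>2\<alpha>\<close>) positions with
  the vertex at position \<open>j\<close> doubled, which gives uniqueness; and an extra rank with a single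
  vertex cannot provide both ends of that path with a private neighbour.\<close>

section \<open>Strict corners\<close>

lemma nbh_iff [simp]: "w \<in> nbh E S v \<longleftrightarrow> w \<in> S \<and> (v, w) \<in> E"
  by (simp add: nbh_def)

lemma nbh_subset: "nbh E S v \<subseteq> S"
  by auto

lemma strict_corners_iff:
  "v \<in> strict_corners E S \<longleftrightarrow> v \<in> S \<and> (\<exists>w\<in>S. w \<noteq> v \<and> nbh E S v \<subset> nbh E S w)"
  by (simp add: strict_corners_def)

lemma strict_corners_subset: "strict_corners E S \<subseteq> S"
  by (auto simp: strict_corners_iff)

text \<open>A dominator of \<open>v\<close> with a largest neighbourhood cannot itself be a strict corner.\<close>

lemma strict_corner_dominated_by_non_corner:
  assumes fin: "finite S" and v: "v \<in> strict_corners E S"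
  shows "\<exists>w\<in>S - strict_corners E S. w \<noteq> v \<and> nbh E S v \<subset> nbh E S w"
proof -
  define D where "D = {w\<in>S. w \<noteq> v \<and> nbh E S v \<subset> nbh E S w}"
  have "D \<noteq> {}" "finite D"
    using v fin by (auto simp: D_def strict_corners_iff)
  then obtain w where w: "w \<in> D" "card (nbh E S w) = Max ((\<lambda>w. card (nbh E S w)) ` D)"
    by (metis (mono_tags, lifting) Max_in finite_imageI imageE image_is_empty)
  have "w \<notin> strict_corners E S"
  proof
    assume "w \<in> strict_corners E S"
    then obtain w' where w': "w' \<in> S" "w' \<noteq> w" "nbh E S w \<subset> nbh E S w'"
      by (auto simp: strict_corners_iff)
    then have "w' \<in> D"
      using w(1) by (auto simp: D_def)
    then have "card (nbh E S w') \<le> card (nbh E S w)"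
      using w(2) \<open>finite D\<close> by simp
    moreover have "card (nbh E S w) < card (nbh E S w')"
      using w'(3) fin by (meson finite_subset nbh_subset psubset_card_mono)
    ultimately show False
      by simp
  qed
  then show ?thesis
    using w(1) by (auto simp: D_def)
qed

lemma private_neighbour_outside:
  assumes "S' \<subseteq> S" "v \<in> S'" "w \<in> S'" "w \<noteq> v" "v \<notin> strict_corners E S"
    and "nbh E S' v \<subset> nbh E S' w"
  shows "\<exists>x\<in>S - S'. (v, x) \<in> E \<and> (w, x) \<notin> E"
proof (rule ccontr)
  assume no_private: "\<not> ?thesis"
  have "nbh E S v \<subseteq> nbh E S w"
  proof
    fix y assume y: "y \<in> nbh E S v"
    show "y \<in> nbh E S w"
      by (cases "y \<in> S'") (use y assms(6) no_private in auto)
  qed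
  moreover obtain y where "y \<in> nbh E S' w" "y \<notin> nbh E S' v"
    using assms(6) by blast
  then have "y \<in> nbh E S w" "y \<notin> nbh E S v"
    using assms(1) by auto
  ultimately have "nbh E S v \<subset> nbh E S w"
    by auto
  then show False
    using assms(1-5) by (auto simp: strict_corners_iff)
qed

section \<open>Corner ranking\<close>

lemma remaining_0 [simp]: "remaining V E 0 = V"
  by (simp add: remaining_def)

lemma remaining_Suc: "remaining V E (Suc k) = cr_step E (remaining V E k)"
  by (simp add: remaining_def)

lemma remaining_subset: "remaining V E k \<subseteq> V"
  by (induction k) (auto simp: remaining_Suc cr_step_def)

lemma remaining_stationary:
  assumes "cr_step E (remaining V E k) = remaining V E k"
  shows "remaining V E (k + i) = remaining V E k"
  using assms by (induction i) (auto simp: remaining_Suc)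

lemma cop_win_clique_at_top:
  assumes "cop_win V E"
  shows "is_clique E (remaining V E (corner_rank V E - 1))"
  using assms unfolding cop_win_def corner_rank_def by (auto intro: LeastI_ex)

lemma remaining_Suc_below_top:
  assumes cw: "cop_win V E" and k: "Suc k < corner_rank V E"
  shows "remaining V E (Suc k) = remaining V E k - strict_corners E (remaining V E k)"
proof -
  have not_clique: "\<not> is_clique E (remaining V E k)"
    using k not_less_Least[of k "\<lambda>k. is_clique E (remaining V E k)"] by (simp add: corner_rank_def)
  moreover have "strict_corners E (remaining V E k) \<noteq> {}"
  proof
    assume "strict_corners E (remaining V E k) = {}"
    then have "remaining V E (k + (corner_rank V E - 1 - k)) = remaining V E k"
      by (intro remaining_stationary) (simp add: cr_step_def)
    then show False
      using cop_win_clique_at_top[OF cw] not_clique k by simp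
  qed
  ultimately show ?thesis
    by (simp add: remaining_Suc cr_step_def)
qed

lemma rank_set_below_top:
  "1 \<le> i \<Longrightarrow> i < corner_rank V E \<Longrightarrow> rank_set V E i = strict_corners E (remaining V E (i - 1))"
  by (simp add: rank_set_def)

lemma rank_set_top: "rank_set V E (corner_rank V E) = remaining V E (corner_rank V E - 1)"
  by (simp add: rank_set_def corner_rank_def)

lemma length_rank_card_vector: "length (rank_card_vector V E) = corner_rank V E"
  by (simp add: rank_card_vector_def)

lemma rev_upt_nth:
  assumes "1 \<le> i" "i \<le> b"
  shows "rev [1..<Suc b] ! (b - i) = i"
proof -
  have "rev [1..<Suc b] ! (b - i) = [1..<Suc b] ! (length [1..<Suc b] - Suc (b - i))"
    by (rule rev_nth) (use assms in simp)
  also have "length [1..<Suc b] - Suc (b - i) = i - 1"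
    using assms by simp
  also have "[1..<Suc b] ! (i - 1) = 1 + (i - 1)"
    by (rule nth_upt) (use assms in simp)
  finally show ?thesis
    using assms by simp
qed

lemma rank_card_vector_nth:
  assumes "1 \<le> i" "i \<le> corner_rank V E"
  shows "rank_card_vector V E ! (corner_rank V E - i) = card (rank_set V E i)"
proof -
  have "corner_rank V E - i < length (rev [1..<Suc (corner_rank V E)])"
    using assms by simp
  then show ?thesis
    unfolding rank_card_vector_def by (simp only: nth_map rev_upt_nth[OF assms])
qed

lemma length_vec_of [simp]: "length (vec_of \<alpha> x) = \<alpha>"
  by (simp add: vec_of_def)

lemma vec_of_nth:
  assumes "1 \<le> i" "i \<le> \<alpha>"
  shows "vec_of \<alpha> x ! (\<alpha> - i) = x i"
proof -
  have "\<alpha> - i < length (rev [1..<Suc \<alpha>])"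
    using assms by simp
  then show ?thesis
    unfolding vec_of_def by (simp only: nth_map rev_upt_nth[OF assms])
qed

lemma card_rank_set_from_vector:
  assumes v: "rank_card_vector V E = ys @ vec_of \<alpha> x @ zs" and i: "1 \<le> i" "i \<le> \<alpha>"
  shows "card (rank_set V E (i + length zs)) = x i"
proof -
  have cr: "corner_rank V E = length ys + \<alpha> + length zs"
    using v length_rank_card_vector[of V E] by simp
  have "card (rank_set V E (i + length zs)) = (ys @ vec_of \<alpha> x @ zs) ! (length ys + (\<alpha> - i))"
    using rank_card_vector_nth[of "i + length zs" V E] i v unfolding cr by (simp add: algebra_simps)
  also have "\<dots> = vec_of \<alpha> x ! (\<alpha> - i)"
    using i by (simp only: nth_append_length_plus) (simp add: nth_append)
  also have "\<dots> = x i"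
    using i by (rule vec_of_nth)
  finally show ?thesis .
qed

section \<open>Doubled paths\<close>

text \<open>The path on the positions \<open>lo..hi\<close> in which position \<open>J\<close> is occupied by two twin vertices
  (so \<open>J \<notin> {lo..hi}\<close> describes a plain path); \<open>pos\<close> places the vertices of \<open>S\<close>.\<close>

definition doubled_path :: "('a \<times> 'a) set \<Rightarrow> 'a set \<Rightarrow> int \<Rightarrow> int \<Rightarrow> int \<Rightarrow> ('a \<Rightarrow> int) \<Rightarrow> bool"
  where "doubled_path E S lo hi J pos \<longleftrightarrow>
    (\<forall>v\<in>S. lo \<le> pos v \<and> pos v \<le> hi) \<and>
    (\<forall>i. lo \<le> i \<and> i \<le> hi \<longrightarrow> card {v\<in>S. pos v = i} = (if i = J then 2 else 1)) \<and>
    (\<forall>u\<in>S. \<forall>v\<in>S. (u, v) \<in> E \<longleftrightarrow> \<bar>pos u - pos v\<bar> \<le> 1)"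

lemma doubled_pathI:
  assumes "\<And>v. v \<in> S \<Longrightarrow> lo \<le> pos v \<and> pos v \<le> hi"
    and "\<And>i. lo \<le> i \<Longrightarrow> i \<le> hi \<Longrightarrow> card {v\<in>S. pos v = i} = (if i = J then 2 else 1)"
    and "\<And>u v. u \<in> S \<Longrightarrow> v \<in> S \<Longrightarrow> (u, v) \<in> E \<longleftrightarrow> \<bar>pos u - pos v\<bar> \<le> 1"
  shows "doubled_path E S lo hi J pos"
  unfolding doubled_path_def using assms by blast

context
  fixes E S lo hi J pos
  assumes P: "doubled_path E S lo hi J pos"
begin

lemma doubled_path_range: "v \<in> S \<Longrightarrow> lo \<le> pos v \<and> pos v \<le> hi"
  using P by (simp add: doubled_path_def)

lemma doubled_path_card_fibre:
  "lo \<le> i \<Longrightarrow> i \<le> hi \<Longrightarrow> card {v\<in>S. pos v = i} = (if i = J then 2 else 1)"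
  using P by (simp add: doubled_path_def)

lemma doubled_path_adj: "u \<in> S \<Longrightarrow> v \<in> S \<Longrightarrow> (u, v) \<in> E \<longleftrightarrow> \<bar>pos u - pos v\<bar> \<le> 1"
  using P by (simp add: doubled_path_def)

lemma doubled_path_nbh: "v \<in> S \<Longrightarrow> nbh E S v = {w\<in>S. \<bar>pos v - pos w\<bar> \<le> 1}"
  using doubled_path_adj by auto

lemma doubled_path_fibre_nonempty:
  assumes "lo \<le> i" "i \<le> hi"
  obtains v where "v \<in> S" "pos v = i"
proof -
  have "{v\<in>S. pos v = i} \<noteq> {}"
    using doubled_path_card_fibre[OF assms] by (metis card.empty zero_neq_numeral zero_neq_one)
  then show ?thesis
    using that by blast
qed

lemma doubled_path_finite_fibre: "finite {v\<in>S. pos v = i}"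
proof (cases "lo \<le> i \<and> i \<le> hi")
  case True
  then show ?thesis
    using doubled_path_card_fibre by (intro card_ge_0_finite) simp
next
  case False
  then have "{v\<in>S. pos v = i} = {}"
    by (auto dest: doubled_path_range)
  then show ?thesis
    by (metis finite.emptyI)
qed

lemma doubled_path_singleton_fibre:
  assumes "lo \<le> i" "i \<le> hi" "i \<noteq> J"
  shows "\<exists>v. {w\<in>S. pos w = i} = {v}"
  using doubled_path_card_fibre[OF assms(1,2)] assms(3) by (simp add: card_1_singleton_iff)

lemma doubled_path_card_two_fibres:
  assumes "a \<noteq> b"
  shows "card {v\<in>S. pos v = a \<or> pos v = b} = card {v\<in>S. pos v = a} + card {v\<in>S. pos v = b}"
proof -
  have "{v\<in>S. pos v = a \<or> pos v = b} = {v\<in>S. pos v = a} \<union> {v\<in>S. pos v = b}"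
    by auto
  moreover have "{v\<in>S. pos v = a} \<inter> {v\<in>S. pos v = b} = {}"
    using assms by auto
  ultimately show ?thesis
    using card_Un_disjoint[OF doubled_path_finite_fibre doubled_path_finite_fibre] by simp
qed

lemma doubled_path_restrict:
  assumes "lo \<le> lo'" "hi' \<le> hi"
  shows "doubled_path E {v\<in>S. lo' \<le> pos v \<and> pos v \<le> hi'} lo' hi' J pos"
proof (rule doubled_pathI)
  fix i assume "lo' \<le> i" "i \<le> hi'"
  moreover have "{v\<in>{v\<in>S. lo' \<le> pos v \<and> pos v \<le> hi'}. pos v = i} = {v\<in>S. pos v = i}"
    using calculation by auto
  ultimately show "card {v\<in>{v\<in>S. lo' \<le> pos v \<and> pos v \<le> hi'}. pos v = i} = (if i = J then 2 else 1)"
    using assms doubled_path_card_fibre by simp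
qed (use doubled_path_adj in auto)

lemma doubled_path_reflect: "doubled_path E S lo hi (lo + hi - J) (\<lambda>v. lo + hi - pos v)"
proof (rule doubled_pathI)
  fix i assume "lo \<le> i" "i \<le> hi"
  moreover have "{v\<in>S. lo + hi - pos v = i} = {v\<in>S. pos v = lo + hi - i}"
    by auto
  ultimately show "card {v\<in>S. lo + hi - pos v = i} = (if i = lo + hi - J then 2 else 1)"
    using doubled_path_card_fibre[of "lo + hi - i"] by auto
next
  fix u v assume "u \<in> S" "v \<in> S"
  then show "(u, v) \<in> E \<longleftrightarrow> \<bar>(lo + hi - pos u) - (lo + hi - pos v)\<bar> \<le> 1"
    using doubled_path_adj[of u v] by linarith
qed (use doubled_path_range in force)

lemma doubled_path_move_twins:
  assumes "J < lo \<or> hi < J" "J' < lo \<or> hi < J'"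
  shows "doubled_path E S lo hi J' pos"
  using P assms unfolding doubled_path_def by auto

lemma doubled_path_clique:
  assumes "hi \<le> lo + 1"
  shows "is_clique E S"
  unfolding is_clique_def
proof (intro ballI)
  fix u v assume uv: "u \<in> S" "v \<in> S"
  then have "\<bar>pos u - pos v\<bar> \<le> 1"
    using doubled_path_range[of u] doubled_path_range[of v] assms by auto
  then show "(u, v) \<in> E"
    using doubled_path_adj[OF uv] by simp
qed

lemma doubled_path_not_clique:
  assumes "lo + 2 \<le> hi"
  shows "\<not> is_clique E S"
proof -
  obtain u where u: "u \<in> S" "pos u = lo"
    using assms doubled_path_fibre_nonempty[of lo] by auto
  obtain w where w: "w \<in> S" "pos w = lo + 2"
    using assms doubled_path_fibre_nonempty[of "lo + 2"] by auto
  have "(u, w) \<notin> E"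
    using doubled_path_adj[OF u(1) w(1)] u w by simp
  then show ?thesis
    using u w unfolding is_clique_def by blast
qed

lemma doubled_path_nbh_end:
  assumes "{v\<in>S. pos v = lo} = {p}"
  shows "nbh E S p = insert p {v\<in>S. pos v = lo + 1}"
proof -
  have p: "p \<in> S" "pos p = lo"
    using assms by auto
  have "nbh E S p = {w\<in>S. pos w = lo} \<union> {w\<in>S. pos w = lo + 1}"
    using doubled_path_nbh[OF p(1)] p(2) doubled_path_range by fastforce
  then show ?thesis
    using assms by auto
qed

lemma doubled_path_end_dominated:
  assumes "v \<in> S" "pos v = lo" "w \<in> S" "pos w = lo + 1" "lo + 2 \<le> hi"
  shows "w \<noteq> v \<and> nbh E S v \<subset> nbh E S w"
proof -
  obtain u where "u \<in> S" "pos u = lo + 2"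
    using assms(5) doubled_path_fibre_nonempty[of "lo + 2"] by auto
  then have "u \<in> nbh E S w - nbh E S v"
    using assms doubled_path_adj by auto
  moreover have "nbh E S v \<subseteq> nbh E S w"
    using assms doubled_path_nbh doubled_path_range by auto
  ultimately show ?thesis
    using assms by auto
qed

end

lemma doubled_path_strict_corners:
  assumes P: "doubled_path E S lo hi J pos" and wide: "lo + 2 \<le> hi"
  shows "strict_corners E S = {v\<in>S. pos v = lo \<or> pos v = hi}"
proof (intro equalityI subsetI)
  fix v assume v: "v \<in> strict_corners E S"
  then obtain w where w: "w \<in> S" "nbh E S v \<subset> nbh E S w"
    by (auto simp: strict_corners_iff)
  have vS: "v \<in> S"
    using v by (simp add: strict_corners_iff)
  show "v \<in> {v\<in>S. pos v = lo \<or> pos v = hi}"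
  proof (rule ccontr)
    assume "v \<notin> {v\<in>S. pos v = lo \<or> pos v = hi}"
    then have "lo < pos v" "pos v < hi"
      using doubled_path_range[OF P vS] vS by auto
    obtain u1 where u1: "u1 \<in> S" "pos u1 = pos v - 1"
      using doubled_path_fibre_nonempty[OF P, of "pos v - 1"] \<open>lo < pos v\<close> \<open>pos v < hi\<close> by auto
    obtain u2 where u2: "u2 \<in> S" "pos u2 = pos v + 1"
      using doubled_path_fibre_nonempty[OF P, of "pos v + 1"] \<open>lo < pos v\<close> \<open>pos v < hi\<close> by auto
    have "u1 \<in> nbh E S v" "u2 \<in> nbh E S v"
      using u1 u2 vS doubled_path_adj[OF P] by auto
    then have "u1 \<in> nbh E S w" "u2 \<in> nbh E S w"
      using w(2) by blast+
    then have "(w, u1) \<in> E" "(w, u2) \<in> E"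
      by auto
    then have "\<bar>pos w - pos u1\<bar> \<le> 1" "\<bar>pos w - pos u2\<bar> \<le> 1"
      using u1 u2 w(1) doubled_path_adj[OF P] by auto
    then have "pos w = pos v"
      using u1 u2 by linarith
    then have "nbh E S w = nbh E S v"
      using doubled_path_nbh[OF P] w(1) vS by simp
    then show False
      using w(2) by simp
  qed
next
  fix v assume v: "v \<in> {v\<in>S. pos v = lo \<or> pos v = hi}"
  show "v \<in> strict_corners E S"
  proof (cases "pos v = lo")
    case True
    obtain w where "w \<in> S" "pos w = lo + 1"
      using wide doubled_path_fibre_nonempty[OF P, of "lo + 1"] by auto
    then show ?thesis
      using v True wide doubled_path_end_dominated[OF P] unfolding strict_corners_iff by blast
  next
    case False
    obtain w where w: "w \<in> S" "pos w = hi - 1"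
      using wide doubled_path_fibre_nonempty[OF P, of "hi - 1"] by auto
    have "lo + hi - pos v = lo" "lo + hi - pos w = lo + 1"
      using v False w by auto
    then show ?thesis
      using v w wide doubled_path_end_dominated[OF doubled_path_reflect[OF P]]
      unfolding strict_corners_iff by blast
  qed
qed

context
  fixes E V n J pos
  assumes P: "doubled_path E V 1 n J pos"
begin

lemma doubled_path_remaining:
  "2 * int k + 1 \<le> n \<Longrightarrow> remaining V E k = {v\<in>V. int k + 1 \<le> pos v \<and> pos v \<le> n - int k}"
proof (induction k)
  case 0
  then show ?case
    using doubled_path_range[OF P] by auto
next
  case (Suc k)
  define S where "S = {v\<in>V. int k + 1 \<le> pos v \<and> pos v \<le> n - int k}"
  have R: "remaining V E k = S"
    using Suc by (simp add: S_def)
  have PS: "doubled_path E S (int k + 1) (n - int k) J pos"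
    unfolding S_def by (rule doubled_path_restrict[OF P]) auto
  have wide: "int k + 1 + 2 \<le> n - int k"
    using Suc.prems by simp
  obtain v where "v \<in> S" "pos v = int k + 1"
    using doubled_path_fibre_nonempty[OF PS, of "int k + 1"] wide by auto
  then have "strict_corners E S \<noteq> {}"
    using doubled_path_strict_corners[OF PS wide] by auto
  then have "remaining V E (Suc k) = S - strict_corners E S"
    using doubled_path_not_clique[OF PS wide] by (simp add: remaining_Suc R cr_step_def)
  also have "\<dots> = {v\<in>V. int (Suc k) + 1 \<le> pos v \<and> pos v \<le> n - int (Suc k)}"
    unfolding doubled_path_strict_corners[OF PS wide] by (auto simp: S_def)
  finally show ?case .
qed

context
  fixes m :: nat
  assumes m: "2 * int m + 1 \<le> n" "n \<le> 2 * int m + 2"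
begin

lemma doubled_path_remaining_top:
  "remaining V E m = {v\<in>V. int m + 1 \<le> pos v \<and> pos v \<le> n - int m}"
  using doubled_path_remaining m by simp

lemma doubled_path_cop_win: "cop_win V E"
  and doubled_path_corner_rank: "corner_rank V E = Suc m"
proof -
  have "doubled_path E (remaining V E m) (int m + 1) (n - int m) J pos"
    unfolding doubled_path_remaining_top by (rule doubled_path_restrict[OF P]) auto
  then have top: "is_clique E (remaining V E m)"
    by (rule doubled_path_clique) (use m in simp)
  then show "cop_win V E"
    unfolding cop_win_def by blast
  have "\<not> is_clique E (remaining V E k)" if "k < m" for k
  proof -
    have "remaining V E k = {v\<in>V. int k + 1 \<le> pos v \<and> pos v \<le> n - int k}"
      using that m by (intro doubled_path_remaining) simp
    then have "doubled_path E (remaining V E k) (int k + 1) (n - int k) J pos"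
      by (simp add: doubled_path_restrict[OF P])
    then show ?thesis
      by (rule doubled_path_not_clique) (use that m in simp)
  qed
  then have "(LEAST k. is_clique E (remaining V E k)) = m"
    using top by (intro Least_equality) (auto simp: not_less[symmetric])
  then show "corner_rank V E = Suc m"
    by (simp add: corner_rank_def)
qed

lemma doubled_path_rank_set:
  assumes i: "1 \<le> i" "i \<le> m"
  shows "rank_set V E i = {v\<in>V. pos v = int i \<or> pos v = n + 1 - int i}"
proof -
  have R: "remaining V E (i - 1) = {v\<in>V. int i \<le> pos v \<and> pos v \<le> n + 1 - int i}"
  proof -
    have "remaining V E (i - 1) = {v\<in>V. int (i - 1) + 1 \<le> pos v \<and> pos v \<le> n - int (i - 1)}"
      using i m by (intro doubled_path_remaining) simp
    moreover have "int (i - 1) + 1 = int i" "n - int (i - 1) = n + 1 - int i"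
      using i by auto
    ultimately show ?thesis
      by (simp only:)
  qed
  have PR: "doubled_path E (remaining V E (i - 1)) (int i) (n + 1 - int i) J pos"
    unfolding R by (rule doubled_path_restrict[OF P]) (use i in auto)
  have "rank_set V E i = strict_corners E (remaining V E (i - 1))"
    using i by (simp add: rank_set_below_top doubled_path_corner_rank)
  also have "\<dots> = {v\<in>remaining V E (i - 1). pos v = int i \<or> pos v = n + 1 - int i}"
    by (rule doubled_path_strict_corners[OF PR]) (use i m in simp)
  also have "\<dots> = {v\<in>V. pos v = int i \<or> pos v = n + 1 - int i}"
    unfolding R using i m by auto
  finally show ?thesis .
qed

lemma doubled_path_even_type0:
  assumes n: "n = 2 * int m + 2" and m1: "1 \<le> m"
  shows "type0 V E"
proof -
  have R: "remaining V E (m - 1) = {v\<in>V. int m \<le> pos v \<and> pos v \<le> int m + 3}"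
  proof -
    have "remaining V E (m - 1) = {v\<in>V. int (m - 1) + 1 \<le> pos v \<and> pos v \<le> n - int (m - 1)}"
      using n m1 by (intro doubled_path_remaining) simp
    moreover have "int (m - 1) + 1 = int m" "n - int (m - 1) = int m + 3"
      using n m1 by auto
    ultimately show ?thesis
      by (simp only:)
  qed
  have "\<not> type1 V E"
  proof
    assume "type1 V E"
    then obtain v where v: "v \<in> rank_set V E (Suc m)" and dom: "\<forall>u\<in>remaining V E (m - 1). (v, u) \<in> E"
      unfolding type1_def doubled_path_corner_rank by auto
    have vV: "v \<in> V" and pv: "pos v = int m + 1 \<or> pos v = int m + 2"
      using v rank_set_top[of V E] doubled_path_remaining_top n
      unfolding doubled_path_corner_rank by auto
    \<comment> \<open>The top vertices sit in the middle of the path and miss a vertex two steps away.\<close>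
    define i where "i = (if pos v = int m + 1 then int m + 3 else int m)"
    have "1 \<le> i" "i \<le> n"
      using n m1 by (auto simp: i_def)
    then obtain u where u: "u \<in> V" "pos u = i"
      by (rule doubled_path_fibre_nonempty[OF P])
    then have "u \<in> remaining V E (m - 1)"
      unfolding R by (auto simp: i_def)
    moreover have "(v, u) \<notin> E"
      using doubled_path_adj[OF P vV u(1)] pv u(2) by (auto simp: i_def)
    ultimately show False
      using dom by blast
  qed
  then show ?thesis
    unfolding type0_def doubled_path_corner_rank using m1 by simp
qed

text \<open>Rank \<open>i\<close> consists of the positions \<open>i\<close> and \<open>n + 1 - i\<close>; the bound on \<open>J\<close> keeps the twins
  on the left.\<close>

lemma doubled_path_card_rank_set:
  assumes J: "1 \<le> J" "2 * J \<le> n + 1" and i: "1 \<le> i" "i \<le> m"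
  shows "card (rank_set V E i) = (if int i = J then 3 else 2)"
proof -
  have "card (rank_set V E i) = card {v\<in>V. pos v = int i} + card {v\<in>V. pos v = n + 1 - int i}"
    unfolding doubled_path_rank_set[OF i] using i m by (intro doubled_path_card_two_fibres[OF P]) simp
  then show ?thesis
    using doubled_path_card_fibre[OF P, of "int i"] doubled_path_card_fibre[OF P, of "n + 1 - int i"]
      J i m by auto
qed

end

end

section \<open>The model graphs\<close>

text \<open>The model graph on \<open>{0..n}\<close>: vertex \<open>v > 0\<close> sits at position \<open>v\<close> of the path and vertex \<open>0\<close>
  is the twin of vertex \<open>j\<close>.\<close>

definition twin_path_pos :: "nat \<Rightarrow> nat \<Rightarrow> int"
  where "twin_path_pos j v = (if v = 0 then int j else int v)"

definition twin_path_edges :: "nat \<Rightarrow> nat \<Rightarrow> (nat \<times> nat) set"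
  where "twin_path_edges n j =
    {(u, v). u \<le> n \<and> v \<le> n \<and> \<bar>twin_path_pos j u - twin_path_pos j v\<bar> \<le> 1}"

lemma graph_twin_path: "graph {0..n} (twin_path_edges n j)"
  unfolding graph_def twin_path_edges_def sym_def by auto

lemma doubled_path_twin_path:
  assumes "1 \<le> j" "j \<le> n"
  shows "doubled_path (twin_path_edges n j) {0..n} 1 (int n) (int j) (twin_path_pos j)"
proof (rule doubled_pathI)
  fix i assume i: "1 \<le> i" "i \<le> int n"
  show "card {v\<in>{0..n}. twin_path_pos j v = i} = (if i = int j then 2 else 1)"
  proof (cases "i = int j")
    case True
    then have "{v\<in>{0..n}. twin_path_pos j v = i} = {0, j}"
      using assms by (auto simp: twin_path_pos_def)
    then show ?thesis
      using True assms by simp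
  next
    case False
    then have "{v\<in>{0..n}. twin_path_pos j v = i} = {nat i}"
      using assms i by (auto simp: twin_path_pos_def)
    then show ?thesis
      using False by simp
  qed
qed (use assms in \<open>auto simp: twin_path_pos_def twin_path_edges_def\<close>)

locale twin_rank_vector =
  fixes \<alpha> j :: nat and x :: "nat \<Rightarrow> nat"
  assumes two_le_alpha: "2 \<le> \<alpha>" and j: "1 < j" "j \<le> \<alpha>"
    and x: "\<And>i. 1 \<le> i \<Longrightarrow> i \<le> \<alpha> \<Longrightarrow> x i = (if i = j then 3 else 2)"
begin

lemma vec_of_levels: "vec_of \<alpha> x = map (\<lambda>i. if int i = int j then 3 else 2) (rev [1..<Suc \<alpha>])"
  unfolding vec_of_def using x by (intro map_cong) auto

lemma realizes_twin_path:
  "realizes {0..2 * \<alpha> + 1} (twin_path_edges (2 * \<alpha> + 1) j) (1 # vec_of \<alpha> x)"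
proof -
  let ?V = "{0..2 * \<alpha> + 1}" and ?E = "twin_path_edges (2 * \<alpha> + 1) j"
  have P: "doubled_path ?E ?V 1 (int (2 * \<alpha> + 1)) (int j) (twin_path_pos j)"
    using j by (intro doubled_path_twin_path) auto
  have m: "2 * int \<alpha> + 1 \<le> int (2 * \<alpha> + 1)" "int (2 * \<alpha> + 1) \<le> 2 * int \<alpha> + 2"
    by simp_all
  have cr: "corner_rank ?V ?E = Suc \<alpha>"
    by (rule doubled_path_corner_rank[OF P m])
  have "rank_set ?V ?E (Suc \<alpha>) = remaining ?V ?E \<alpha>"
    using rank_set_top[of ?V ?E] unfolding cr by simp
  also have "\<dots> = {v\<in>?V. int \<alpha> + 1 \<le> twin_path_pos j v \<and> twin_path_pos j v \<le> int \<alpha> + 1}"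
    unfolding doubled_path_remaining_top[OF P m] by simp
  also have "\<dots> = {v\<in>?V. twin_path_pos j v = int \<alpha> + 1}"
    by (intro Collect_cong) linarith
  finally have top: "card (rank_set ?V ?E (Suc \<alpha>)) = 1"
    using doubled_path_card_fibre[OF P, of "int \<alpha> + 1"] j by simp
  have levels: "card (rank_set ?V ?E i) = (if int i = int j then 3 else 2)" if "i \<in> {1..\<alpha>}" for i
    using that j by (intro doubled_path_card_rank_set[OF P m]) auto
  have "rev [1..<Suc (Suc \<alpha>)] = Suc \<alpha> # rev [1..<Suc \<alpha>]"
    by simp
  then have "rank_card_vector ?V ?E = 1 # map (\<lambda>i. card (rank_set ?V ?E i)) (rev [1..<Suc \<alpha>])"
    unfolding rank_card_vector_def cr by (simp only: list.map top)
  also have "\<dots> = 1 # vec_of \<alpha> x"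
    unfolding vec_of_levels using levels by (intro arg_cong[where f = "Cons 1"] map_cong) auto
  finally show ?thesis
    unfolding realizes_def using graph_twin_path doubled_path_cop_win[OF P m] by blast
qed

lemma zero_realizes_twin_path:
  "zero_realizes {0..2 * \<alpha>} (twin_path_edges (2 * \<alpha>) j) (vec_of \<alpha> x)"
proof -
  let ?V = "{0..2 * \<alpha>}" and ?E = "twin_path_edges (2 * \<alpha>) j"
  have P: "doubled_path ?E ?V 1 (int (2 * \<alpha>)) (int j) (twin_path_pos j)"
    using j by (intro doubled_path_twin_path) auto
  have m: "2 * int (\<alpha> - 1) + 1 \<le> int (2 * \<alpha>)" "int (2 * \<alpha>) \<le> 2 * int (\<alpha> - 1) + 2"
    using two_le_alpha by simp_all
  have cr: "corner_rank ?V ?E = \<alpha>"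
    using doubled_path_corner_rank[OF P m] two_le_alpha by simp
  have "rank_set ?V ?E \<alpha> = remaining ?V ?E (\<alpha> - 1)"
    using rank_set_top[of ?V ?E] unfolding cr .
  also have "\<dots> = {v\<in>?V. int (\<alpha> - 1) + 1 \<le> twin_path_pos j v \<and>
      twin_path_pos j v \<le> int (2 * \<alpha>) - int (\<alpha> - 1)}"
    by (rule doubled_path_remaining_top[OF P m])
  also have "\<dots> = {v\<in>?V. twin_path_pos j v = int \<alpha> \<or> twin_path_pos j v = int \<alpha> + 1}"
    using two_le_alpha by (intro Collect_cong) (simp add: of_nat_diff, linarith)
  finally have top_set: "rank_set ?V ?E \<alpha> =
      {v\<in>?V. twin_path_pos j v = int \<alpha> \<or> twin_path_pos j v = int \<alpha> + 1}" .
  have "card (rank_set ?V ?E \<alpha>) =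
      card {v\<in>?V. twin_path_pos j v = int \<alpha>} + card {v\<in>?V. twin_path_pos j v = int \<alpha> + 1}"
    unfolding top_set by (rule doubled_path_card_two_fibres[OF P]) simp
  then have "card (rank_set ?V ?E \<alpha>) = (if int \<alpha> = int j then 3 else 2)"
    using doubled_path_card_fibre[OF P, of "int \<alpha>"] doubled_path_card_fibre[OF P, of "int \<alpha> + 1"] two_le_alpha j
    by auto
  moreover have "card (rank_set ?V ?E i) = (if int i = int j then 3 else 2)" if "1 \<le> i" "i \<le> \<alpha> - 1" for i
    using that j by (intro doubled_path_card_rank_set[OF P m]) auto
  ultimately have levels: "card (rank_set ?V ?E i) = (if int i = int j then 3 else 2)" if "i \<in> {1..\<alpha>}" for i
    using that by (cases "i = \<alpha>") auto
  have rv: "rank_card_vector ?V ?E = vec_of \<alpha> x"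
    unfolding rank_card_vector_def cr vec_of_levels using levels by (intro map_cong) auto
  have "type0 ?V ?E"
    using two_le_alpha by (intro doubled_path_even_type0[OF P m]) auto
  then show ?thesis
    unfolding zero_realizes_def realizes_def using graph_twin_path doubled_path_cop_win[OF P m] rv by blast
qed

end

section \<open>Isomorphism of doubled paths\<close>

lemma fibre_preserving_bij:
  fixes f :: "'a \<Rightarrow> 'c" and g :: "'b \<Rightarrow> 'c"
  assumes fin: "\<And>i. finite {v\<in>A. f v = i}" "\<And>i. finite {v\<in>B. g v = i}"
    and card: "\<And>i. card {v\<in>A. f v = i} = card {v\<in>B. g v = i}"
  obtains h where "bij_betw h A B" "\<And>v. v \<in> A \<Longrightarrow> g (h v) = f v"
proof -
  have "\<forall>i. \<exists>h. bij_betw h {v\<in>A. f v = i} {v\<in>B. g v = i}"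
    using finite_same_card_bij[OF fin card] by blast
  then obtain h where h: "\<forall>i. bij_betw (h i) {v\<in>A. f v = i} {v\<in>B. g v = i}"
    by (rule choice[THEN exE])
  have maps: "h (f v) v \<in> B \<and> g (h (f v) v) = f v" if "v \<in> A" for v
  proof -
    have "h (f v) v \<in> {u\<in>B. g u = f v}"
      using h that by (intro bij_betw_apply[of "h (f v)" "{u\<in>A. f u = f v}"]) auto
    then show ?thesis
      by simp
  qed
  have "bij_betw (\<lambda>v. h (f v) v) A B"
  proof (rule bij_betwI')
    fix v w assume vw: "v \<in> A" "w \<in> A"
    show "h (f v) v = h (f w) w \<longleftrightarrow> v = w"
    proof
      assume eq: "h (f v) v = h (f w) w"
      then have "f v = f w"
        using maps[OF vw(1)] maps[OF vw(2)] by simp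
      moreover have "inj_on (h (f v)) {u\<in>A. f u = f v}"
        using h bij_betw_imp_inj_on by blast
      ultimately show "v = w"
        using eq vw by (auto simp: inj_on_def)
    qed simp
  next
    fix v assume "v \<in> A"
    then show "h (f v) v \<in> B"
      using maps by blast
  next
    fix u assume u: "u \<in> B"
    have "h (g u) ` {v\<in>A. f v = g u} = {v\<in>B. g v = g u}"
      using h bij_betw_imp_surj_on by blast
    then have "u \<in> h (g u) ` {v\<in>A. f v = g u}"
      using u by simp
    then obtain v where "v \<in> {v\<in>A. f v = g u}" "u = h (g u) v"
      by (rule imageE)
    then show "\<exists>v\<in>A. u = h (f v) v"
      by (intro bexI[of _ v]) simp_all
  qed
  then show ?thesis
    using that maps by blast
qed

lemma doubled_path_iso:
  assumes P1: "doubled_path E1 V1 lo hi J pos1" and P2: "doubled_path E2 V2 lo hi J pos2"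
  shows "graph_iso V1 E1 V2 E2"
proof -
  have card: "card {v\<in>V1. pos1 v = i} = card {v\<in>V2. pos2 v = i}" for i
  proof (cases "lo \<le> i \<and> i \<le> hi")
    case True
    then show ?thesis
      using doubled_path_card_fibre[OF P1] doubled_path_card_fibre[OF P2] by simp
  next
    case False
    then have "{v\<in>V1. pos1 v = i} = {}" "{v\<in>V2. pos2 v = i} = {}"
      by (auto dest: doubled_path_range[OF P1] doubled_path_range[OF P2])
    then show ?thesis
      by (simp only: card.empty)
  qed
  obtain h where h: "bij_betw h V1 V2" "\<And>v. v \<in> V1 \<Longrightarrow> pos2 (h v) = pos1 v"
    using fibre_preserving_bij[OF doubled_path_finite_fibre[OF P1] doubled_path_finite_fibre[OF P2] card]
    by blast
  have "(u, v) \<in> E1 \<longleftrightarrow> (h u, h v) \<in> E2" if "u \<in> V1" "v \<in> V1" for u v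
    using that h doubled_path_adj[OF P1] doubled_path_adj[OF P2] bij_betw_apply[OF h(1)] by simp
  then show ?thesis
    unfolding graph_iso_def using h(1) by blast
qed

section \<open>Growing a doubled path by a layer of corners\<close>

lemma doubled_path_singleton: "(c, c) \<in> E \<Longrightarrow> J \<noteq> l \<Longrightarrow> doubled_path E {c} l l J (\<lambda>_. l)"
  by (rule doubled_pathI) auto

lemma doubled_path_edge:
  assumes "(p, p) \<in> E" "(q, q) \<in> E" "(p, q) \<in> E" "(q, p) \<in> E" "p \<noteq> q" "J \<noteq> l" "J \<noteq> l + 1"
  shows "doubled_path E {p, q} l (l + 1) J (\<lambda>v. if v = p then l else l + 1)"
proof (rule doubled_pathI)
  fix i assume i: "l \<le> i" "i \<le> l + 1"
  then have "{v\<in>{p, q}. (if v = p then l else l + 1) = i} = (if i = l then {p} else {q})"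
    using assms(5) by auto
  moreover have "i \<noteq> J"
    using i assms(6,7) by auto
  ultimately show "card {v\<in>{p, q}. (if v = p then l else l + 1) = i} = (if i = J then 2 else 1)"
    by simp
qed (use assms in auto)

definition extend_pos :: "'a set \<Rightarrow> 'a set \<Rightarrow> int \<Rightarrow> int \<Rightarrow> ('a \<Rightarrow> int) \<Rightarrow> 'a \<Rightarrow> int"
  where "extend_pos A B lo hi pos v = (if v \<in> A then lo - 1 else if v \<in> B then hi + 1 else pos v)"

context
  fixes E :: "('a \<times> 'a) set" and S S' A B :: "'a set" and lo hi J :: int and pos :: "'a \<Rightarrow> int"
  assumes sym: "sym E" and P: "doubled_path E S' lo hi J pos" and lohi: "lo \<le> hi"
    and S: "S = S' \<union> A \<union> B" and disj: "A \<inter> S' = {}" "B \<inter> S' = {}" "A \<inter> B = {}"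
    and card_A: "card A = (if lo - 1 = J then 2 else 1)" and card_B: "card B = (if hi + 1 = J then 2 else 1)"
    and nbh_A: "\<And>a. a \<in> A \<Longrightarrow> nbh E S a = A \<union> {v\<in>S'. pos v = lo}"
    and nbh_B: "\<And>b. b \<in> B \<Longrightarrow> nbh E S b = B \<union> {v\<in>S'. pos v = hi}"
begin

lemma extend_pos_fibre:
  assumes i: "lo - 1 \<le> i" "i \<le> hi + 1"
  shows "{v\<in>S. extend_pos A B lo hi pos v = i} =
    (if i = lo - 1 then A else if i = hi + 1 then B else {v\<in>S'. pos v = i})"
  using S disj lohi i by (auto simp: extend_pos_def dest: doubled_path_range[OF P])

lemma extend_pos_adj:
  assumes "u \<in> S" "v \<in> S"
  shows "(u, v) \<in> E \<longleftrightarrow> \<bar>extend_pos A B lo hi pos u - extend_pos A B lo hi pos v\<bar> \<le> 1"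
proof -
  have new: "(u, v) \<in> E \<longleftrightarrow> \<bar>extend_pos A B lo hi pos u - extend_pos A B lo hi pos v\<bar> \<le> 1"
    if u: "u \<in> A \<union> B" and v: "v \<in> S" for u v
  proof -
    have "(u, v) \<in> E \<longleftrightarrow> v \<in> (if u \<in> A then A \<union> {w\<in>S'. pos w = lo} else B \<union> {w\<in>S'. pos w = hi})"
      using nbh_A nbh_B u v by (metis UnE nbh_iff)
    also have "\<dots> \<longleftrightarrow> \<bar>extend_pos A B lo hi pos u - extend_pos A B lo hi pos v\<bar> \<le> 1"
      using u v S lohi disj by (auto simp: extend_pos_def dest: doubled_path_range[OF P])
    finally show ?thesis .
  qed
  show ?thesis
  proof (cases "u \<in> A \<union> B \<or> v \<in> A \<union> B")
    case True
    then show ?thesis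
      using assms new[of u v] new[of v u] sym by (auto simp: abs_minus_commute dest: symD)
  next
    case False
    then show ?thesis
      using assms S doubled_path_adj[OF P] by (auto simp: extend_pos_def)
  qed
qed

lemma doubled_path_extend: "doubled_path E S (lo - 1) (hi + 1) J (extend_pos A B lo hi pos)"
proof (rule doubled_pathI)
  show "lo - 1 \<le> extend_pos A B lo hi pos v \<and> extend_pos A B lo hi pos v \<le> hi + 1" if "v \<in> S" for v
    using that S lohi by (auto simp: extend_pos_def dest: doubled_path_range[OF P])
  show "card {v\<in>S. extend_pos A B lo hi pos v = i} = (if i = J then 2 else 1)"
    if "lo - 1 \<le> i" "i \<le> hi + 1" for i
    using extend_pos_fibre[OF that] card_A card_B doubled_path_card_fibre[OF P, of i] that by auto
qed (rule extend_pos_adj)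

end

locale corner_layer =
  fixes E :: "('a \<times> 'a) set" and S S' X :: "'a set"
  assumes sym: "sym E" and loops: "\<forall>v\<in>S. (v, v) \<in> E" and finite: "finite S"
    and corners: "X = strict_corners E S" and core: "S' = S - X"
begin

lemma edge_sym: "(a, b) \<in> E \<Longrightarrow> (b, a) \<in> E"
  using sym by (auto dest: symD)

lemma layer: "X \<subseteq> S" "S' \<subseteq> S" "S = S' \<union> X" "S - S' = X" "S' \<inter> X = {}"
  using strict_corners_subset[of E S] corners core by auto

lemma corner_in: "x \<in> X \<Longrightarrow> x \<in> S"
  using layer by blast

lemma core_in: "x \<in> S' \<Longrightarrow> x \<in> S"
  using layer by blast

lemma corner_not_core: "x \<in> X \<Longrightarrow> x \<notin> S'"
  using layer by blast

lemma loop: "v \<in> S \<Longrightarrow> (v, v) \<in> E"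
  using loops by blast

lemma corner_dominated: "x \<in> X \<Longrightarrow> \<exists>w\<in>S'. w \<noteq> x \<and> nbh E S x \<subset> nbh E S w"
  using strict_corner_dominated_by_non_corner[OF finite] corners core by blast

lemma core_not_dominated:
  assumes "v \<in> S'" "w \<in> S" "w \<noteq> v"
  shows "\<not> nbh E S v \<subset> nbh E S w"
  using assms corners core by (auto simp: strict_corners_iff)

lemma private_neighbour:
  assumes "v \<in> S'" "w \<in> S'" "w \<noteq> v" "nbh E S' v \<subset> nbh E S' w"
  shows "\<exists>y\<in>X. (v, y) \<in> E \<and> (w, y) \<notin> E"
proof -
  have "v \<notin> strict_corners E S"
    using assms(1) corners core by blast
  then show ?thesis
    using private_neighbour_outside[OF layer(2) assms(1-3) _ assms(4)] layer(4) by blast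
qed

lemma corners_eq_pair:
  assumes "card X \<le> 2" "a \<in> X" "b \<in> X" "a \<noteq> b"
  shows "X = {a, b}"
proof -
  have "finite X"
    using finite layer(1) finite_subset by blast
  moreover have "{a, b} \<subseteq> X" "card {a, b} = 2"
    using assms by auto
  ultimately show ?thesis
    using assms(1) by (metis card_seteq)
qed

end

text \<open>In applications \<open>p\<close> and \<open>q\<close> are the ends of a doubled path \<open>S'\<close>, and \<open>P\<close>, \<open>Q\<close> the
  fibres next to them.\<close>

locale path_ends_layer = corner_layer +
  fixes p q :: 'a and P Q :: "'a set"
  assumes ends: "p \<in> S'" "q \<in> S'" "p \<noteq> q" "(p, q) \<notin> E"
    and nbh_p: "nbh E S' p = insert p P" and nbh_q: "nbh E S' q = insert q Q"
    and dominate_p: "\<And>w. w \<in> P \<Longrightarrow> w \<noteq> p \<and> nbh E S' p \<subset> nbh E S' w"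
    and dominate_q: "\<And>w. w \<in> Q \<Longrightarrow> w \<noteq> q \<and> nbh E S' q \<subset> nbh E S' w"
    and nonempty: "P \<noteq> {}" "Q \<noteq> {}"
    and shared: "\<And>w. w \<in> P \<inter> Q \<Longrightarrow> P = {w} \<and> Q = {w}"
    and two_corners: "card X \<le> 2"
begin

lemma swap: "path_ends_layer E S S' X q p Q P"
proof (rule path_ends_layer.intro[OF corner_layer_axioms], unfold_locales)
  show "(q, p) \<notin> E"
    using ends(4) edge_sym by blast
  show "Q = {w} \<and> P = {w}" if "w \<in> Q \<inter> P" for w
    using shared[of w] that by blast
qed (rule ends(2), rule ends(1), use ends(3) in blast, rule nbh_q, rule nbh_p, erule dominate_q, erule dominate_p,
    rule nonempty(2), rule nonempty(1), rule two_corners)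

lemma private_corner:
  assumes "w \<in> P"
  shows "\<exists>x\<in>X. (p, x) \<in> E \<and> (w, x) \<notin> E"
proof -
  have "w \<in> S'"
    using assms nbh_p nbh_subset[of E S' p] by blast
  then show ?thesis
    using private_neighbour[OF ends(1)] dominate_p[OF assms] by blast
qed

text \<open>A corner seen by both ends is dominated by a common neighbour of the ends, which then is the
  only vertex of \<open>P\<close>.\<close>

lemma corner_at_both_ends:
  assumes x: "x \<in> X" "(p, x) \<in> E" "(q, x) \<in> E" and w0: "w0 \<in> P"
  shows "(w0, x) \<in> E"
proof -
  obtain w where w: "w \<in> S'" "nbh E S x \<subset> nbh E S w"
    using corner_dominated[OF x(1)] by blast
  have "p \<in> nbh E S x" "q \<in> nbh E S x" "x \<in> nbh E S x"
    using x ends corner_in core_in loop edge_sym by auto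
  then have wE: "(w, p) \<in> E" "(w, q) \<in> E" "(w, x) \<in> E"
    using w(2) by auto
  have "w \<in> insert p P" "w \<in> insert q Q"
    unfolding nbh_p[symmetric] nbh_q[symmetric] using w(1) wE edge_sym by auto
  moreover have "w \<noteq> p" "w \<noteq> q"
    using wE(1,2) ends(4) edge_sym by auto
  ultimately have "P = {w}"
    using shared by blast
  then show ?thesis
    using w0 wE(3) by simp
qed

lemma corner_of_end_only:
  obtains x where "x \<in> X" "(p, x) \<in> E" "(q, x) \<notin> E"
proof -
  obtain w0 where "w0 \<in> P"
    using nonempty by blast
  then obtain x where "x \<in> X" "(p, x) \<in> E" "(w0, x) \<notin> E"
    using private_corner by blast
  then show ?thesis
    using that corner_at_both_ends \<open>w0 \<in> P\<close> by blast
qed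

lemma pendant_at_end:
  assumes X: "X = {xp, xq}" and xp: "(p, xp) \<in> E" and xq: "(p, xq) \<notin> E"
  shows "nbh E S xp = {xp, p}"
proof -
  have P_xp: "(w, xp) \<notin> E" if w: "w \<in> P" for w
  proof -
    obtain x where "x \<in> X" "(p, x) \<in> E" "(w, x) \<notin> E"
      using private_corner[OF w] by blast
    moreover from this have "x = xp"
      using X xq by auto
    ultimately show ?thesis
      by simp
  qed
  have xpS: "xp \<in> S"
    using X corner_in by auto
  obtain w where w: "w \<in> S'" "nbh E S xp \<subset> nbh E S w"
    using corner_dominated X by blast
  have "p \<in> nbh E S xp" "xp \<in> nbh E S xp"
    using xp xpS ends(1) core_in loop edge_sym by auto
  then have "(w, p) \<in> E" "(w, xp) \<in> E"
    using w(2) by auto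
  then have "w \<in> insert p P"
    unfolding nbh_p[symmetric] using w(1) edge_sym by simp
  then have "w = p"
    using P_xp \<open>(w, xp) \<in> E\<close> by blast
  have "y \<in> {xp, p}" if y: "y \<in> nbh E S xp" for y
  proof -
    have "y \<in> nbh E S p"
      using y w(2) \<open>w = p\<close> by blast
    have "y \<in> insert p P \<or> y \<in> X"
    proof (cases "y \<in> S'")
      case True
      then have "y \<in> nbh E S' p"
        using \<open>y \<in> nbh E S p\<close> by simp
      then show ?thesis
        using nbh_p by simp
    next
      case False
      then show ?thesis
        using \<open>y \<in> nbh E S p\<close> layer(4) by auto
    qed
    moreover have "y \<notin> P"
      using y P_xp edge_sym by auto
    moreover have "y \<noteq> xq"
      using \<open>y \<in> nbh E S p\<close> xq by auto
    ultimately show ?thesis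
      using X by auto
  qed
  then show ?thesis
    using \<open>p \<in> nbh E S xp\<close> \<open>xp \<in> nbh E S xp\<close> by blast
qed

lemma pendants_at_ends:
  obtains xp xq where "X = {xp, xq}" "xp \<noteq> xq" "nbh E S xp = {xp, p}" "nbh E S xq = {xq, q}"
proof -
  interpret swapped: path_ends_layer E S S' X q p Q P
    by (rule swap)
  obtain xp where xp: "xp \<in> X" "(p, xp) \<in> E" "(q, xp) \<notin> E"
    by (rule corner_of_end_only)
  obtain xq where xq: "xq \<in> X" "(q, xq) \<in> E" "(p, xq) \<notin> E"
    by (rule swapped.corner_of_end_only)
  have "xp \<noteq> xq"
    using xp xq by auto
  then have X: "X = {xp, xq}"
    using corners_eq_pair two_corners xp(1) xq(1) by blast
  then show ?thesis
    using that \<open>xp \<noteq> xq\<close> pendant_at_end[OF X xp(2) xq(3)]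
      swapped.pendant_at_end[of xq xp] xq(2) xp(3) by (simp add: insert_commute)
qed

end

context corner_layer
begin

lemma doubled_path_grows_by_pendants:
  assumes P: "doubled_path E S' lo hi J pos" "lo \<le> hi" and X: "X = {a, b}" "a \<noteq> b"
    and nbh_a: "nbh E S a = insert a {v\<in>S'. pos v = lo}"
    and nbh_b: "nbh E S b = insert b {v\<in>S'. pos v = hi}"
    and J: "J \<noteq> lo - 1" "J \<noteq> hi + 1"
  shows "\<exists>pos'. doubled_path E S (lo - 1) (hi + 1) J pos'"
proof -
  have "doubled_path E S (lo - 1) (hi + 1) J (extend_pos {a} {b} lo hi pos)"
  proof (rule doubled_path_extend[OF sym P])
    show "S = S' \<union> {a} \<union> {b}" "{a} \<inter> S' = {}" "{b} \<inter> S' = {}" "{a} \<inter> {b} = {}"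
      using layer X by auto
  qed (use nbh_a nbh_b J in auto)
  then show ?thesis
    by blast
qed

lemma path_ends_layer_of_doubled_path:
  assumes P: "doubled_path E S' lo hi J pos" and wide: "lo + 2 \<le> hi"
    and J: "hi = lo + 2 \<longrightarrow> J \<noteq> lo + 1" and two_corners: "card X \<le> 2"
    and p: "{w\<in>S'. pos w = lo} = {p}" and q: "{w\<in>S'. pos w = hi} = {q}"
  shows "path_ends_layer E S S' X p q {v\<in>S'. pos v = lo + 1} {v\<in>S'. pos v = hi - 1}"
proof unfold_locales
  have R: "doubled_path E S' lo hi (lo + hi - J) (\<lambda>v. lo + hi - pos v)"
    by (rule doubled_path_reflect[OF P])
  have q': "{w\<in>S'. lo + hi - pos w = lo} = {q}" "{v\<in>S'. pos v = hi - 1} = {v\<in>S'. lo + hi - pos v = lo + 1}"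
    using q by auto
  have pS: "p \<in> S'" "pos p = lo" and qS: "q \<in> S'" "pos q = hi"
    using p q by auto
  show "p \<in> S'" "q \<in> S'" "p \<noteq> q"
    using pS qS wide by auto
  show "(p, q) \<notin> E"
    using doubled_path_adj[OF P pS(1) qS(1)] pS(2) qS(2) wide by simp
  show "nbh E S' p = insert p {v\<in>S'. pos v = lo + 1}"
    by (rule doubled_path_nbh_end[OF P p])
  show "nbh E S' q = insert q {v\<in>S'. pos v = hi - 1}"
    unfolding q'(2) by (rule doubled_path_nbh_end[OF R q'(1)])
  show "w \<noteq> p \<and> nbh E S' p \<subset> nbh E S' w" if "w \<in> {v\<in>S'. pos v = lo + 1}" for w
    using that pS doubled_path_end_dominated[OF P _ _ _ _ wide] by blast
  show "w \<noteq> q \<and> nbh E S' q \<subset> nbh E S' w" if "w \<in> {v\<in>S'. pos v = hi - 1}" for w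
    using that qS doubled_path_end_dominated[OF R _ _ _ _ wide] unfolding q'(2) by auto
  obtain v1 where "v1 \<in> S'" "pos v1 = lo + 1"
    by (rule doubled_path_fibre_nonempty[OF P, of "lo + 1"]) (use wide in auto)
  then show "{v\<in>S'. pos v = lo + 1} \<noteq> {}"
    by blast
  obtain v2 where "v2 \<in> S'" "pos v2 = hi - 1"
    by (rule doubled_path_fibre_nonempty[OF P, of "hi - 1"]) (use wide in auto)
  then show "{v\<in>S'. pos v = hi - 1} \<noteq> {}"
    by blast
  show "{v\<in>S'. pos v = lo + 1} = {w} \<and> {v\<in>S'. pos v = hi - 1} = {w}"
    if "w \<in> {v\<in>S'. pos v = lo + 1} \<inter> {v\<in>S'. pos v = hi - 1}" for w
  proof -
    have "hi = lo + 2"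
      using that by auto
    then obtain v where v: "{x\<in>S'. pos x = lo + 1} = {v}"
      using doubled_path_singleton_fibre[OF P, of "lo + 1"] J by auto
    moreover have "{x\<in>S'. pos x = hi - 1} = {x\<in>S'. pos x = lo + 1}"
      using \<open>hi = lo + 2\<close> by (simp add: add.commute)
    ultimately show ?thesis
      using that by simp
  qed
qed (fact two_corners)

lemma doubled_path_grows_by_ends:
  assumes P: "doubled_path E S' lo hi J pos" and wide: "lo + 2 \<le> hi"
    and J: "J \<noteq> lo - 1" "J \<noteq> lo" "J \<noteq> hi" "J \<noteq> hi + 1" "hi = lo + 2 \<longrightarrow> J \<noteq> lo + 1"
    and two_corners: "card X \<le> 2"
  shows "card X = 2 \<and> (\<exists>pos'. doubled_path E S (lo - 1) (hi + 1) J pos')"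
proof -
  obtain p where p: "{w\<in>S'. pos w = lo} = {p}"
    using doubled_path_singleton_fibre[OF P, of lo] J wide by auto
  obtain q where q: "{w\<in>S'. pos w = hi} = {q}"
    using doubled_path_singleton_fibre[OF P, of hi] J wide by auto
  interpret path_ends_layer E S S' X p q "{v\<in>S'. pos v = lo + 1}" "{v\<in>S'. pos v = hi - 1}"
    by (rule path_ends_layer_of_doubled_path[OF P wide J(5) two_corners p q])
  obtain a b where ab: "X = {a, b}" "a \<noteq> b" "nbh E S a = {a, p}" "nbh E S b = {b, q}"
    by (rule pendants_at_ends)
  have "\<exists>pos'. doubled_path E S (lo - 1) (hi + 1) J pos'"
    using ab p q wide J by (intro doubled_path_grows_by_pendants[OF P _ ab(1,2)]) auto
  then show ?thesis
    using ab(1,2) by auto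
qed

lemma doubled_path_over_vertex:
  assumes core_c: "S' = {c}" and two: "card X = 2" and J: "J \<noteq> l - 1" "J \<noteq> l" "J \<noteq> l + 1"
  shows "\<exists>pos. doubled_path E S (l - 1) (l + 1) J pos"
proof -
  obtain a b where X: "X = {a, b}" "a \<noteq> b"
    using two by (auto simp: card_2_iff)
  have pendant: "nbh E S x = {x, c}" if xy: "X = {x, y}" "x \<noteq> y" for x y
  proof -
    have S3: "S = {c, x, y}"
      using layer(3) core_c xy(1) by auto
    obtain w where w: "w \<in> S'" "nbh E S x \<subset> nbh E S w"
      using corner_dominated xy(1) by blast
    have x: "x \<in> nbh E S x"
      using xy(1) corner_in loop by auto
    then have c: "c \<in> nbh E S x"
      using w core_c S3 edge_sym by auto
    have "y \<notin> nbh E S x"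
    proof
      assume "y \<in> nbh E S x"
      then have "S \<subseteq> nbh E S x"
        using x c S3 by auto
      then show False
        using w(2) nbh_subset[of E S w] by blast
    qed
    then have "nbh E S x \<subseteq> {x, c}"
      using nbh_subset[of E S x] S3 by blast
    then show ?thesis
      using x c by blast
  qed
  have "doubled_path E S' l l J (\<lambda>_. l)"
    unfolding core_c using J(2) core_c loop core_in by (intro doubled_path_singleton) auto
  moreover have "nbh E S a = insert a {v\<in>S'. l = l}" "nbh E S b = insert b {v\<in>S'. l = l}"
    using pendant[OF X] pendant[of b a] X core_c by (auto simp: insert_commute)
  ultimately show ?thesis
    using doubled_path_grows_by_pendants[OF _ _ X] J by fastforce
qed

lemma clique_core_split:
  assumes clique: "is_clique E S'" and undominated: "\<forall>v\<in>S'. \<exists>u\<in>S. (v, u) \<notin> E"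
    and X: "X = {a, b}" "a \<noteq> b"
  shows "\<And>s. s \<in> S' \<Longrightarrow> (s, b) \<in> E \<longleftrightarrow> (s, a) \<notin> E"
    and "nbh E S a = insert a {s\<in>S'. (s, a) \<in> E}" "nbh E S b = insert b {s\<in>S'. (s, b) \<in> E}"
    and "\<exists>s\<in>S'. (s, a) \<in> E" "\<exists>s\<in>S'. (s, b) \<in> E"
proof -
  have S: "S = S' \<union> {a, b}"
    using layer(3) X by auto
  have ab: "a \<in> S" "b \<in> S" "a \<notin> S'" "b \<notin> S'"
    using X corner_in corner_not_core by auto
  have not_both: "\<not> ((s, a) \<in> E \<and> (s, b) \<in> E)" if s: "s \<in> S'" for s
  proof
    assume "(s, a) \<in> E \<and> (s, b) \<in> E"
    then have "\<forall>u\<in>S. (s, u) \<in> E"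
      using clique s S unfolding is_clique_def by auto
    then show False
      using undominated s by blast
  qed
  obtain wa where wa: "wa \<in> S'" "nbh E S a \<subset> nbh E S wa"
    using corner_dominated X by blast
  obtain wb where wb: "wb \<in> S'" "nbh E S b \<subset> nbh E S wb"
    using corner_dominated X by blast
  have "a \<in> nbh E S a" "b \<in> nbh E S b"
    using ab loop by auto
  then have wa_a: "(wa, a) \<in> E" and wb_b: "(wb, b) \<in> E"
    using wa(2) wb(2) by auto
  have seen: "(s, a) \<in> E \<or> (s, b) \<in> E" if s: "s \<in> S'" for s
  proof (rule ccontr)
    assume none: "\<not> ((s, a) \<in> E \<or> (s, b) \<in> E)"
    then have "nbh E S s = S'"
      using clique s S unfolding is_clique_def by auto
    moreover have "a \<in> nbh E S wa"
      using wa_a ab by (simp add: edge_sym)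
    ultimately have "nbh E S s \<subset> nbh E S wa"
      using wa(1) clique ab unfolding is_clique_def by auto
    moreover have "wa \<noteq> s"
      using none wa_a by auto
    ultimately show False
      using core_not_dominated[OF s core_in[OF wa(1)]] by blast
  qed
  have "(a, b) \<notin> E"
  proof
    assume "(a, b) \<in> E"
    then have "(wa, b) \<in> E"
      using wa(2) ab by auto
    then show False
      using not_both[OF wa(1)] wa_a by simp
  qed
  show "(s, b) \<in> E \<longleftrightarrow> (s, a) \<notin> E" if "s \<in> S'" for s
    using not_both[OF that] seen[OF that] by blast
  show "nbh E S a = insert a {s\<in>S'. (s, a) \<in> E}" "nbh E S b = insert b {s\<in>S'. (s, b) \<in> E}"
    using S ab \<open>(a, b) \<notin> E\<close> loop edge_sym by auto
  show "\<exists>s\<in>S'. (s, a) \<in> E" "\<exists>s\<in>S'. (s, b) \<in> E"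
    using wa wa_a wb wb_b by auto
qed

lemma doubled_path_over_clique_oriented:
  assumes clique: "is_clique E S'" and undominated: "\<forall>v\<in>S'. \<exists>u\<in>S. (v, u) \<notin> E"
    and X: "X = {x, y}" "x \<noteq> y"
    and cx: "card {s\<in>S'. (s, x) \<in> E} = (if J = lo then 2 else 1)"
    and cy: "card {s\<in>S'. (s, y) \<in> E} = (if J = lo + 1 then 2 else 1)"
    and J: "J \<noteq> lo - 1" "J \<noteq> lo + 2"
  shows "\<exists>pos. doubled_path E S (lo - 1) (lo + 2) J pos"
proof -
  note split = clique_core_split[OF clique undominated X]
  define pos where "pos s = (if (s, x) \<in> E then lo else lo + 1)" for s
  have fibre_lo: "{s\<in>S'. pos s = lo} = {s\<in>S'. (s, x) \<in> E}"
    by (auto simp: pos_def)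
  have fibre_hi: "{s\<in>S'. pos s = lo + 1} = {s\<in>S'. (s, y) \<in> E}"
    using split(1) by (auto simp: pos_def)
  have "doubled_path E S' lo (lo + 1) J pos"
  proof (rule doubled_pathI)
    fix i assume "lo \<le> i" "i \<le> lo + 1"
    then consider "i = lo" | "i = lo + 1"
      by linarith
    then show "card {s\<in>S'. pos s = i} = (if i = J then 2 else 1)"
      by cases (use fibre_lo fibre_hi cx cy in auto)
  next
    fix u v assume "u \<in> S'" "v \<in> S'"
    then show "(u, v) \<in> E \<longleftrightarrow> \<bar>pos u - pos v\<bar> \<le> 1"
      using clique unfolding is_clique_def pos_def by auto
  qed (auto simp: pos_def)
  moreover have "nbh E S x = insert x {s\<in>S'. pos s = lo}" "nbh E S y = insert y {s\<in>S'. pos s = lo + 1}"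
    using split(2,3) fibre_lo fibre_hi by simp_all
  ultimately have "\<exists>pos'. doubled_path E S (lo - 1) (lo + 1 + 1) J pos'"
    using J by (intro doubled_path_grows_by_pendants[OF _ _ X]) auto
  then show ?thesis
    by (simp add: add.assoc)
qed

lemma doubled_path_over_clique:
  assumes clique: "is_clique E S'" and undominated: "\<forall>v\<in>S'. \<exists>u\<in>S. (v, u) \<notin> E"
    and two: "card X = 2"
    and size: "card S' = (if J = lo then 2 else 1) + (if J = lo + 1 then 2 else 1)"
    and J: "J \<noteq> lo - 1" "J \<noteq> lo + 2"
  shows "\<exists>pos. doubled_path E S (lo - 1) (lo + 2) J pos"
proof -
  obtain a b where X: "X = {a, b}" "a \<noteq> b"
    using two by (auto simp: card_2_iff)
  note split = clique_core_split[OF clique undominated X]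
  define A where "A = {s\<in>S'. (s, a) \<in> E}"
  define B where "B = {s\<in>S'. (s, b) \<in> E}"
  have "finite S'"
    using finite layer(2) finite_subset by blast
  moreover have "S' = A \<union> B" "A \<inter> B = {}"
    using split(1) by (auto simp: A_def B_def)
  ultimately have "card A + card B = card S'"
    by (metis card_Un_disjoint finite_Un)
  moreover have "card A \<noteq> 0" "card B \<noteq> 0"
    using split(4,5) \<open>finite S'\<close> by (auto simp: A_def B_def)
  ultimately have "card A = (if J = lo then 2 else 1) \<and> card B = (if J = lo + 1 then 2 else 1) \<or>
      card B = (if J = lo then 2 else 1) \<and> card A = (if J = lo + 1 then 2 else 1)"
    using size by (auto split: if_splits)
  then show ?thesis
    using doubled_path_over_clique_oriented[OF clique undominated X _ _ J]
      doubled_path_over_clique_oriented[OF clique undominated, of b a] X J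
    by (auto simp: A_def B_def insert_commute)
qed

end

locale two_corner_layers = corner_layer E S S' X0 for E S S' X0 +
  fixes S'' X1 :: "'a set"
  assumes upper_corners: "X1 = strict_corners E S'" and upper_core: "S'' = S' - X1"
begin

sublocale upper: corner_layer E S' S'' X1
proof
  show "\<forall>v\<in>S'. (v, v) \<in> E" "finite S'"
    using loops finite layer(2) finite_subset by blast+
qed (fact sym upper_corners upper_core)+

lemma doubled_path_grows_by_twins:
  assumes P: "doubled_path E S'' lo hi J pos" and J: "J = lo - 1" and lohi: "lo \<le> hi"
    and fibre_lo: "{w\<in>S''. pos w = lo} = {u}" and fibre_hi: "{w\<in>S''. pos w = hi} = {v}"
    and X1: "X1 = {a, t, b}" "a \<noteq> t" "b \<noteq> a" "b \<noteq> t" and X0: "X0 = {d, e}" "d \<noteq> e"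
    and nbh_a: "nbh E S' a = {a, t, u}" and nbh_t: "nbh E S' t = {a, t, u}"
    and nbh_b: "nbh E S' b = {b, v}"
    and nbh_d: "nbh E S d = {d, a, t}" and nbh_e: "nbh E S e = {e, b}"
  shows "\<exists>pos'. doubled_path E S (lo - 2) (hi + 2) J pos'"
proof -
  define pos1 where "pos1 = extend_pos {a, t} {b} lo hi pos"
  have P1: "doubled_path E S' (lo - 1) (hi + 1) J pos1"
    unfolding pos1_def
  proof (rule doubled_path_extend[OF sym P lohi])
    show "S' = S'' \<union> {a, t} \<union> {b}" "{a, t} \<inter> S'' = {}" "{b} \<inter> S'' = {}" "{a, t} \<inter> {b} = {}"
      using upper.layer X1 by auto
    show "nbh E S' x = {a, t} \<union> {v\<in>S''. pos v = lo}" if "x \<in> {a, t}" for x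
      using that nbh_a nbh_t fibre_lo by auto
    show "nbh E S' x = {b} \<union> {v\<in>S''. pos v = hi}" if "x \<in> {b}" for x
      using that nbh_b fibre_hi by auto
  qed (use J lohi X1 in auto)
  have "{x\<in>S'. pos1 x = lo - 1} = {a, t}" "{x\<in>S'. pos1 x = hi + 1} = {b}"
    using upper.layer(3) X1 lohi by (auto simp: pos1_def extend_pos_def dest: doubled_path_range[OF P])
  then have "\<exists>pos'. doubled_path E S (lo - 1 - 1) (hi + 1 + 1) J pos'"
    using nbh_d nbh_e J lohi by (intro doubled_path_grows_by_pendants[OF P1 _ X0]) auto
  then show ?thesis
    by (simp add: algebra_simps)
qed

end

text \<open>Two layers of corners below a doubled path \<open>S''\<close> with ends \<open>p\<close>, \<open>q\<close>, where the rank of three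
  vertices sits: it has to put twins next to one of the ends.\<close>

locale twin_layers = two_corner_layers +
  fixes p q p' q' xp xq :: 'a
  assumes ends: "p \<in> S''" "q \<in> S''" "p \<noteq> q"
    and nbh_p: "nbh E S'' p = {p, p'}" and nbh_q: "nbh E S'' q = {q, q'}"
    and corner_p: "xp \<in> X1" "(p, xp) \<in> E" "(p', xp) \<notin> E" "(q, xp) \<notin> E"
    and corner_q: "xq \<in> X1" "(q, xq) \<in> E" "(q', xq) \<notin> E" "(p, xq) \<notin> E"
    and three: "card X1 = 3" and two: "card X0 \<le> 2"
begin

lemma swap: "twin_layers E S S' X0 S'' X1 q p q' p' xq xp"
proof (rule twin_layers.intro[OF two_corner_layers_axioms], unfold_locales)
qed (use ends nbh_p nbh_q corner_p corner_q three two in auto)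

lemma core_nbr_p: "y \<in> S'' \<Longrightarrow> (p, y) \<in> E \<Longrightarrow> y = p \<or> y = p'"
  using nbh_p by (metis insertE nbh_iff singletonD)

lemma ends_in: "p \<in> S'" "q \<in> S'"
  using ends(1,2) upper.core_in by auto

lemma p'_in: "p' \<in> S''" "(p, p') \<in> E"
  using nbh_p[symmetric] by (auto simp: insert_iff)

lemma xp_below_p: "nbh E S' xp \<subset> nbh E S' p"
proof -
  obtain w where w: "w \<in> S''" "nbh E S' xp \<subset> nbh E S' w"
    using upper.corner_dominated[OF corner_p(1)] by blast
  have "p \<in> nbh E S' xp" "xp \<in> nbh E S' xp"
    using corner_p(1,2) ends_in upper.corner_in upper.loop edge_sym by auto
  then have "(w, p) \<in> E" "(w, xp) \<in> E"
    using w(2) by auto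
  then have "w = p"
    using core_nbr_p[OF w(1)] corner_p(3) edge_sym by blast
  then show ?thesis
    using w(2) by simp
qed

lemma lower_corner_of_xp: "\<exists>d\<in>X0. (xp, d) \<in> E \<and> (p, d) \<notin> E"
proof -
  have "p \<noteq> xp"
    using ends(1) corner_p(1) upper.corner_not_core by auto
  then show ?thesis
    using private_neighbour[OF upper.corner_in[OF corner_p(1)] ends_in(1) _ xp_below_p] by blast
qed

lemma no_shared_corner:
  assumes y: "y \<in> X0" "(xp, y) \<in> E" "(xq, y) \<in> E" "(p, y) \<notin> E"
  shows False
proof -
  obtain u where u: "u \<in> S'" "nbh E S y \<subset> nbh E S u"
    using corner_dominated[OF y(1)] by blast
  have "xp \<in> nbh E S y" "xq \<in> nbh E S y" "y \<in> nbh E S y"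
    using y corner_p(1) corner_q(1) corner_in core_in upper.corner_in loop edge_sym by auto
  then have uE: "(u, xp) \<in> E" "(u, xq) \<in> E" "(u, y) \<in> E"
    using u(2) by auto
  have "u \<in> nbh E S' xp"
    using u(1) uE(1) edge_sym by auto
  then have up: "(p, u) \<in> E"
    using xp_below_p by auto
  show False
  proof (cases "u \<in> S''")
    case True
    then show False
      using core_nbr_p[OF True up] uE(1,3) y(4) corner_p(3) by auto
  next
    case False
    then have uX: "u \<in> X1"
      using u(1) upper.layer by blast
    obtain w where w: "w \<in> S''" "nbh E S' u \<subset> nbh E S' w"
      using upper.corner_dominated[OF uX] by blast
    have "p \<in> nbh E S' u" "xp \<in> nbh E S' u" "xq \<in> nbh E S' u"
      using up uE ends_in corner_p(1) corner_q(1) upper.corner_in edge_sym by auto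
    then have "(w, p) \<in> E" "(w, xp) \<in> E" "(w, xq) \<in> E"
      using w(2) by auto
    then show False
      using core_nbr_p[OF w(1)] corner_p(3) corner_q(4) edge_sym by blast
  qed
qed

text \<open>If the third corner \<open>x3\<close> of \<open>S'\<close> shares with \<open>xp\<close> a corner of \<open>S\<close> that \<open>p\<close> misses, then
  \<open>xp\<close> and \<open>x3\<close> are the twins next to \<open>p\<close>.\<close>

context
  fixes x3 d e :: 'a
  assumes x3: "x3 \<in> X1" "x3 \<noteq> xp" "x3 \<noteq> xq"
    and d: "d \<in> X0" "(xp, d) \<in> E" "(p, d) \<notin> E" "(x3, d) \<in> E"
    and e: "e \<in> X0" "(xq, e) \<in> E" "(q, e) \<notin> E"
    and de: "d \<noteq> e"
begin

lemma twin_layers_eq: "X1 = {xp, x3, xq}" "X0 = {d, e}"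
proof -
  have fin: "finite X1"
    using upper.finite upper.layer(1) finite_subset by blast
  have "xp \<noteq> xq"
    using corner_p(2) corner_q(4) by auto
  then have sub: "{xp, x3, xq} \<subseteq> X1" and card: "card {xp, x3, xq} = 3"
    using corner_p(1) corner_q(1) x3 by auto
  show "X1 = {xp, x3, xq}"
    using card_seteq[OF fin sub] card three by simp
  show "X0 = {d, e}"
    by (rule corners_eq_pair[OF two d(1) e(1) de])
qed

lemma d_dominated_by_twin:
  obtains u where "u = xp \<or> u = x3" "nbh E S d \<subset> nbh E S u"
proof -
  obtain u where u: "u \<in> S'" "nbh E S d \<subset> nbh E S u"
    using corner_dominated[OF d(1)] by blast
  have "xp \<in> nbh E S d" "x3 \<in> nbh E S d" "d \<in> nbh E S d"
    using d corner_p(1) x3(1) upper.corner_in core_in corner_in loop edge_sym by auto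
  then have uE: "(u, xp) \<in> E" "(u, x3) \<in> E" "(u, d) \<in> E"
    using u(2) by auto
  have "u \<in> nbh E S' xp"
    using u(1) uE(1) edge_sym by auto
  then have up: "(p, u) \<in> E"
    using xp_below_p by auto
  have "u \<notin> S''"
    using core_nbr_p[OF _ up] uE(1,3) d(3) corner_p(3) by auto
  then have "u \<in> X1"
    using u(1) upper.layer by blast
  then have "u = xp \<or> u = x3"
    using twin_layers_eq(1) up corner_q(4) by auto
  then show ?thesis
    using that u(2) by blast
qed

lemma twins_adjacent: "(xp, x3) \<in> E" "(p, x3) \<in> E"
proof -
  obtain u where u: "u = xp \<or> u = x3" "nbh E S d \<subset> nbh E S u"
    by (rule d_dominated_by_twin)
  have "xp \<in> nbh E S d" "x3 \<in> nbh E S d"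
    using d corner_p(1) x3(1) upper.corner_in core_in edge_sym by auto
  then show xpx3: "(xp, x3) \<in> E"
    using u edge_sym by auto
  have "x3 \<in> nbh E S' xp"
    using xpx3 x3(1) upper.corner_in by auto
  then show "(p, x3) \<in> E"
    using xp_below_p by auto
qed

lemma nbh_p_upper: "nbh E S' p = {p, p', xp, x3}"
proof (intro equalityI subsetI)
  fix y assume y: "y \<in> nbh E S' p"
  show "y \<in> {p, p', xp, x3}"
  proof (cases "y \<in> S''")
    case True
    then show ?thesis
      using core_nbr_p y by auto
  next
    case False
    then have "y \<in> X1"
      using y upper.layer by auto
    then show ?thesis
      using twin_layers_eq(1) y corner_q(4) by auto
  qed
next
  fix y assume "y \<in> {p, p', xp, x3}"
  then show "y \<in> nbh E S' p"
    using p'_in ends_in corner_p x3(1) twins_adjacent upper.core_in upper.corner_in upper.loop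
    by auto
qed

lemma nbh_twins: "nbh E S' xp = {xp, x3, p}" "nbh E S' x3 = {xp, x3, p}"
proof -
  obtain w where w: "w \<in> S''" "nbh E S' x3 \<subset> nbh E S' w"
    using upper.corner_dominated[OF x3(1)] by blast
  have in3: "p \<in> nbh E S' x3" "xp \<in> nbh E S' x3" "x3 \<in> nbh E S' x3"
    using twins_adjacent ends_in corner_p(1) x3(1) upper.corner_in upper.loop edge_sym by auto
  then have "(w, p) \<in> E" "(w, xp) \<in> E"
    using w(2) by auto
  then have "w = p"
    using core_nbr_p[OF w(1)] corner_p(3) edge_sym by blast
  have "(x3, p') \<notin> E"
  proof
    assume "(x3, p') \<in> E"
    then have "nbh E S' p \<subseteq> nbh E S' x3"
      unfolding nbh_p_upper using in3 p'_in upper.core_in by auto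
    then show False
      using w(2) \<open>w = p\<close> by auto
  qed
  moreover have "nbh E S' x3 \<subseteq> {p, p', xp, x3}"
    using w(2) \<open>w = p\<close> nbh_p_upper by auto
  ultimately show "nbh E S' x3 = {xp, x3, p}"
    using in3 by auto
  show "nbh E S' xp = {xp, x3, p}"
    using xp_below_p corner_p twins_adjacent x3(1) ends_in upper.corner_in upper.loop edge_sym
    unfolding nbh_p_upper by auto
qed

lemma nbh_xq: "nbh E S' xq = {xq, q}"
proof -
  interpret swapped: twin_layers E S S' X0 S'' X1 q p q' p' xq xp
    by (rule swap)
  have "(q, x3) \<notin> E"
  proof
    assume "(q, x3) \<in> E"
    then have "q \<in> nbh E S' x3"
      using ends_in edge_sym by auto
    then show False
      using nbh_twins(2) ends corner_p(1) x3(1) upper.corner_not_core by auto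
  qed
  have "nbh E S' q \<subseteq> {q, q', xq}"
  proof
    fix y assume y: "y \<in> nbh E S' q"
    show "y \<in> {q, q', xq}"
    proof (cases "y \<in> S''")
      case True
      then show ?thesis
        using swapped.core_nbr_p y by auto
    next
      case False
      then have "y \<in> {xp, x3, xq}"
        using y upper.layer(3) twin_layers_eq(1) by auto
      then show ?thesis
        using y corner_p(4) \<open>(q, x3) \<notin> E\<close> by auto
    qed
  qed
  then have "nbh E S' xq \<subseteq> {q, q', xq}"
    using swapped.xp_below_p by auto
  moreover have "q' \<notin> nbh E S' xq" "{xq, q} \<subseteq> nbh E S' xq"
    using corner_q ends_in upper.corner_in upper.loop edge_sym by auto
  ultimately show ?thesis
    by auto
qed

lemma lower_nbhs: "nbh E S d = {d, xp, x3}" "nbh E S e = {e, xq}"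
proof -
  have split_nbh: "nbh E S v = nbh E S' v \<union> {y\<in>X0. (v, y) \<in> E}" for v
    using layer by auto
  obtain u where u: "u = xp \<or> u = x3" "nbh E S d \<subset> nbh E S u"
    by (rule d_dominated_by_twin)
  obtain u' where u': "u' \<in> S'" "nbh E S e \<subset> nbh E S u'"
    using corner_dominated[OF e(1)] by blast
  have in_e: "xq \<in> nbh E S e" "e \<in> nbh E S e"
    using e corner_q(1) upper.corner_in core_in corner_in loop edge_sym by auto
  then have "(u', xq) \<in> E" "(u', e) \<in> E"
    using u'(2) by auto
  then have "u' = xq"
    using nbh_xq u'(1) e(3) edge_sym by auto
  have "(d, e) \<notin> E"
  proof
    assume "(d, e) \<in> E"
    then have "d \<in> nbh E S e"
      using d(1) corner_in edge_sym by auto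
    then have "(xq, d) \<in> E"
      using u'(2) \<open>u' = xq\<close> by auto
    then show False
      using no_shared_corner d(1,2,3) by blast
  qed
  have "nbh E S d \<subseteq> {xp, x3, p, d, e}"
    using u split_nbh[of u] nbh_twins twin_layers_eq(2) by auto
  moreover have "p \<notin> nbh E S d" "e \<notin> nbh E S d"
    using d(3) \<open>(d, e) \<notin> E\<close> edge_sym by auto
  moreover have "{d, xp, x3} \<subseteq> nbh E S d"
    using d corner_p(1) x3(1) upper.corner_in core_in corner_in loop edge_sym by auto
  ultimately show "nbh E S d = {d, xp, x3}"
    by auto
  have "nbh E S e \<subseteq> {xq, q, d, e}"
    using u'(2) \<open>u' = xq\<close> split_nbh[of xq] nbh_xq twin_layers_eq(2) by auto
  moreover have "q \<notin> nbh E S e" "d \<notin> nbh E S e"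
    using e(3) \<open>(d, e) \<notin> E\<close> edge_sym by auto
  ultimately show "nbh E S e = {e, xq}"
    using in_e by auto
qed

end

lemma doubled_path_grows:
  assumes P: "doubled_path E S'' lo hi J pos" and J: "J = lo - 1" and lohi: "lo \<le> hi"
    and fibre_p: "{w\<in>S''. pos w = lo} = {p}" and fibre_q: "{w\<in>S''. pos w = hi} = {q}"
  shows "\<exists>pos'. doubled_path E S (lo - 2) (hi + 2) J pos'"
proof -
  interpret swapped: twin_layers E S S' X0 S'' X1 q p q' p' xq xp
    by (rule swap)
  obtain dp where dp: "dp \<in> X0" "(xp, dp) \<in> E" "(p, dp) \<notin> E"
    using lower_corner_of_xp by blast
  obtain dq where dq: "dq \<in> X0" "(xq, dq) \<in> E" "(q, dq) \<notin> E"
    using swapped.lower_corner_of_xp by blast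
  have "dp \<noteq> dq"
    using no_shared_corner dp dq(2) by blast
  then have X0: "X0 = {dp, dq}"
    by (rule corners_eq_pair[OF two dp(1) dq(1)])
  have "\<not> X1 \<subseteq> {xp, xq}"
  proof
    assume "X1 \<subseteq> {xp, xq}"
    then have "card X1 \<le> card {xp, xq}"
      by (rule card_mono[rotated]) simp
    also have "\<dots> \<le> 2"
      by (rule card_insert_le_m1) auto
    finally show False
      using three by simp
  qed
  then obtain x3 where x3: "x3 \<in> X1" "x3 \<noteq> xp" "x3 \<noteq> xq"
    by blast
  obtain w where w: "w \<in> S''" "w \<noteq> x3" "nbh E S' x3 \<subset> nbh E S' w"
    using upper.corner_dominated[OF x3(1)] by blast
  obtain y where y: "y \<in> X0" "(x3, y) \<in> E"
    using private_neighbour[OF upper.corner_in[OF x3(1)] upper.core_in[OF w(1)] w(2,3)] by blast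
  have xpq: "xp \<noteq> xq"
    using corner_p(2) corner_q(4) by auto
  show ?thesis
  proof (cases "y = dp")
    case True
    then have "(x3, dp) \<in> E"
      using y by simp
    note hyps = x3 dp this dq \<open>dp \<noteq> dq\<close>
    show ?thesis
      using twin_layers_eq[OF hyps] nbh_twins[OF hyps] nbh_xq[OF hyps] lower_nbhs[OF hyps] x3 xpq
        \<open>dp \<noteq> dq\<close>
      by (intro doubled_path_grows_by_twins[OF P J lohi fibre_p fibre_q]) auto
  next
    case False
    then have "(x3, dq) \<in> E"
      using y X0 by auto
    note hyps = x3(1,3,2) dq this dp \<open>dp \<noteq> dq\<close>[symmetric]
    have R: "doubled_path E S'' lo hi J (\<lambda>v. lo + hi - pos v)"
      using doubled_path_move_twins[OF doubled_path_reflect[OF P]] J lohi by auto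
    have "{w\<in>S''. lo + hi - pos w = lo} = {q}" "{w\<in>S''. lo + hi - pos w = hi} = {p}"
      using fibre_p fibre_q by auto
    then show ?thesis
      using swapped.twin_layers_eq[OF hyps] swapped.nbh_twins[OF hyps] swapped.nbh_xq[OF hyps]
        swapped.lower_nbhs[OF hyps] x3 xpq \<open>dp \<noteq> dq\<close>
      by (intro doubled_path_grows_by_twins[OF R J lohi]) auto
  qed
qed

end

context two_corner_layers
begin

context
  fixes c :: 'a
  assumes core_c: "S'' = {c}" and two: "card X0 = 2"
begin

lemma c_in: "c \<in> S'" "c \<in> S"
  using core_c upper.core_in core_in by auto

lemma c_dominates:
  assumes x: "x \<in> X1"
  shows "nbh E S' x \<subset> nbh E S' c" "(c, x) \<in> E"
proof -
  obtain w where "w \<in> S''" "nbh E S' x \<subset> nbh E S' w"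
    using upper.corner_dominated[OF x] by blast
  then show dominated: "nbh E S' x \<subset> nbh E S' c"
    using core_c by simp
  have "x \<in> nbh E S' x"
    using x upper.corner_in upper.loop by simp
  then show "(c, x) \<in> E"
    using dominated by auto
qed

lemma private_lower_corner:
  assumes x: "x \<in> X1"
  shows "\<exists>y\<in>X0. (x, y) \<in> E \<and> (c, y) \<notin> E"
proof -
  have "c \<noteq> x"
    using x core_c upper.corner_not_core by auto
  then show ?thesis
    using private_neighbour[OF upper.corner_in[OF x] c_in(1) _ c_dominates(1)[OF x]] by blast
qed

lemma no_corner_sees_both_others:
  assumes "X1 = {x, y, y'}" "(x, y) \<in> E" "(x, y') \<in> E"
  shows False
proof -
  have x: "x \<in> X1"
    using assms(1) by simp
  have "S' \<subseteq> nbh E S' x"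
  proof
    fix v assume v: "v \<in> S'"
    then have "v = c \<or> v = x \<or> v = y \<or> v = y'"
      using upper.layer(3) core_c assms(1) by auto
    then show "v \<in> nbh E S' x"
      using v assms(2,3) x upper.loop upper.corner_in c_dominates(2)[OF x] edge_sym by auto
  qed
  then show False
    using c_dominates(1)[OF x] nbh_subset[of E S' c] by blast
qed

context
  fixes x1 x2 x3 z :: 'a
  assumes X1: "X1 = {x1, x2, x3}" "x1 \<noteq> x2" "x1 \<noteq> x3" "x2 \<noteq> x3"
    and z: "z \<in> X0" "(x1, z) \<in> E" "(x2, z) \<in> E" "(c, z) \<notin> E"
begin

lemma shared_lower_corner_dominated:
  obtains u where "u = x1 \<or> u = x2" "nbh E S z \<subset> nbh E S u"
proof -
  obtain u where u: "u \<in> S'" "nbh E S z \<subset> nbh E S u"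
    using corner_dominated[OF z(1)] by blast
  have "x1 \<in> nbh E S z" "x2 \<in> nbh E S z" "z \<in> nbh E S z"
    using z X1(1) upper.corner_in core_in corner_in loop edge_sym by auto
  then have uE: "(u, x1) \<in> E" "(u, x2) \<in> E" "(u, z) \<in> E"
    using u(2) by auto
  have "u \<noteq> c"
    using uE(3) z(4) by auto
  then have "u \<in> X1"
    using u(1) upper.layer(3) core_c by auto
  moreover have "u \<noteq> x3"
    using no_corner_sees_both_others[of x3 x1 x2] uE X1(1) by auto
  ultimately show ?thesis
    using that u(2) X1(1) by auto
qed

lemma twin_corners_adjacency: "(x1, x2) \<in> E" "(x1, x3) \<notin> E" "(x2, x3) \<notin> E"
proof -
  obtain u where u: "u = x1 \<or> u = x2" "nbh E S z \<subset> nbh E S u"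
    by (rule shared_lower_corner_dominated)
  have "x1 \<in> nbh E S z" "x2 \<in> nbh E S z"
    using z X1(1) upper.corner_in core_in edge_sym by auto
  then show x12: "(x1, x2) \<in> E"
    using u edge_sym by auto
  show "(x1, x3) \<notin> E" "(x2, x3) \<notin> E"
    using no_corner_sees_both_others[of x1 x2 x3] no_corner_sees_both_others[of x2 x1 x3] X1(1) x12
      edge_sym by (auto simp: insert_commute)
qed

lemma nbhs_over_vertex:
  "nbh E S' x1 = {x1, x2, c}" "nbh E S' x2 = {x1, x2, c}" "nbh E S' x3 = {x3, c}"
proof -
  have S': "S' = {c, x1, x2, x3}"
    using upper.layer(3) core_c X1(1) by auto
  have "(x1, c) \<in> E" "(x2, c) \<in> E" "(x3, c) \<in> E" "(x2, x1) \<in> E" "(x3, x1) \<notin> E" "(x3, x2) \<notin> E"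
    using c_dominates(2) X1(1) twin_corners_adjacency edge_sym by auto
  moreover have "(x1, x1) \<in> E" "(x2, x2) \<in> E" "(x3, x3) \<in> E"
    using S' upper.loop by auto
  ultimately show "nbh E S' x1 = {x1, x2, c}" "nbh E S' x2 = {x1, x2, c}" "nbh E S' x3 = {x3, c}"
    using twin_corners_adjacency unfolding nbh_def S' by auto
qed

lemma lower_nbhs_over_vertex:
  obtains z' where "X0 = {z, z'}" "z \<noteq> z'" "nbh E S z = {z, x1, x2}" "nbh E S z' = {z', x3}"
proof -
  note adj = twin_corners_adjacency
  obtain u where u: "u = x1 \<or> u = x2" "nbh E S z \<subset> nbh E S u"
    by (rule shared_lower_corner_dominated)
  have "(z, x3) \<notin> E"
  proof
    assume "(z, x3) \<in> E"
    then have "x3 \<in> nbh E S z"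
      using X1(1) upper.corner_in core_in by auto
    then show False
      using u adj by auto
  qed
  obtain z' where z': "z' \<in> X0" "(x3, z') \<in> E" "(c, z') \<notin> E"
    using private_lower_corner[of x3] X1(1) by auto
  have "z \<noteq> z'"
    using \<open>(z, x3) \<notin> E\<close> z'(2) edge_sym by auto
  have X0: "X0 = {z, z'}"
    using corners_eq_pair[OF _ z(1) z'(1) \<open>z \<noteq> z'\<close>] two by simp
  have S: "S = {c, x1, x2, x3, z, z'}"
    using layer(3) upper.layer(3) core_c X1(1) X0 by auto
  obtain u' where u': "u' \<in> S'" "nbh E S z' \<subset> nbh E S u'"
    using corner_dominated[OF z'(1)] by blast
  have in_z': "x3 \<in> nbh E S z'" "z' \<in> nbh E S z'"
    using z' X1(1) upper.corner_in core_in corner_in loop edge_sym by auto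
  then have "(u', x3) \<in> E" "(u', z') \<in> E"
    using u'(2) by auto
  then have "u' = x3"
    using u'(1) upper.layer(3) core_c X1(1) adj z'(3) edge_sym by auto
  have "nbh E S x3 \<subseteq> {x3, c, z'}"
    using S adj \<open>(z, x3) \<notin> E\<close> edge_sym by auto
  then have nbh_z': "nbh E S z' = {z', x3}"
    using u'(2) \<open>u' = x3\<close> in_z' z'(3) edge_sym by auto
  have "(u, z') \<notin> E"
  proof
    assume "(u, z') \<in> E"
    then have "u \<in> nbh E S z'"
      using u(1) X1(1) upper.corner_in core_in edge_sym by auto
    then show False
      using nbh_z' u(1) X1 z'(1) X1(1) upper.corner_in corner_not_core by auto
  qed
  then have "nbh E S u \<subseteq> {c, x1, x2, z}"
    using S u(1) adj by auto
  moreover have "{z, x1, x2} \<subseteq> nbh E S z"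
    using z X1(1) upper.corner_in core_in corner_in loop edge_sym by auto
  ultimately have "nbh E S z = {z, x1, x2}"
    using u(2) z(4) edge_sym by auto
  then show ?thesis
    using that X0 \<open>z \<noteq> z'\<close> nbh_z' by blast
qed

end

lemma doubled_path_twins_over_vertex:
  assumes three: "card X1 = 3" and J: "J = l - 1"
  shows "\<exists>pos. doubled_path E S (l - 2) (l + 2) J pos"
proof -
  obtain x1 x2 x3 where X1: "X1 = {x1, x2, x3}" "x1 \<noteq> x2" "x2 \<noteq> x3" "x1 \<noteq> x3"
    using three by (auto simp: card_3_iff)
  obtain y1 where y1: "y1 \<in> X0" "(x1, y1) \<in> E" "(c, y1) \<notin> E"
    using private_lower_corner X1(1) by blast
  obtain y2 where y2: "y2 \<in> X0" "(x2, y2) \<in> E" "(c, y2) \<notin> E"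
    using private_lower_corner X1(1) by blast
  obtain y3 where y3: "y3 \<in> X0" "(x3, y3) \<in> E" "(c, y3) \<notin> E"
    using private_lower_corner X1(1) by blast
  note y = y1 y2 y3
  \<comment> \<open>\<open>S\<close> has only two corners, so two corners of \<open>S'\<close> share their private one.\<close>
  have "y1 = y2 \<or> y1 = y3 \<or> y2 = y3"
    using y(1,4,7) two by (auto simp: card_2_iff)
  then obtain a t b z where abt: "X1 = {a, t, b}" "a \<noteq> t" "a \<noteq> b" "t \<noteq> b"
    and z: "z \<in> X0" "(a, z) \<in> E" "(t, z) \<in> E" "(c, z) \<notin> E"
  proof (elim disjE)
    assume "y1 = y2"
    then show ?thesis
      using that[of x1 x2 x3 y1] X1 y by auto
  next
    assume "y1 = y3"
    then show ?thesis
      using that[of x1 x3 x2 y1] X1 y by auto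
  next
    assume "y2 = y3"
    then show ?thesis
      using that[of x2 x3 x1 y2] X1 y by auto
  qed
  have P: "doubled_path E S'' l l J (\<lambda>_. l)"
    unfolding core_c using J c_in upper.loop by (intro doubled_path_singleton) auto
  have fibre: "{w\<in>S''. l = l} = {c}"
    using core_c by simp
  obtain z' where z': "X0 = {z, z'}" "z \<noteq> z'" "nbh E S z = {z, a, t}" "nbh E S z' = {z', b}"
    by (rule lower_nbhs_over_vertex[OF abt z])
  note upper_nbhs = nbhs_over_vertex[OF abt z]
  have "nbh E S' a = {a, t, c}" "nbh E S' t = {a, t, c}" "nbh E S' b = {b, c}"
    using upper_nbhs by auto
  then show ?thesis
    using doubled_path_grows_by_twins[OF P J _ fibre fibre abt(1,2) _ _ z'(1,2)] abt(3,4) z'(3,4)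
    by auto
qed

end

lemma private_corner_over_edge:
  assumes core: "S'' = {u, w}" "u \<noteq> w" "(u, w) \<in> E" and undominated: "\<exists>y\<in>S'. (w, y) \<notin> E"
  shows "\<exists>x\<in>X1. (u, x) \<in> E \<and> (w, x) \<notin> E"
proof (rule ccontr)
  assume no_private: "\<not> ?thesis"
  have uw: "u \<in> S''" "w \<in> S''" "(w, u) \<in> E"
    using core edge_sym by auto
  have "nbh E S' u \<subseteq> nbh E S' w"
  proof
    fix y assume y: "y \<in> nbh E S' u"
    show "y \<in> nbh E S' w"
    proof (cases "y \<in> S''")
      case True
      then show ?thesis
        using y core uw upper.core_in upper.loop by auto
    next
      case False
      then show ?thesis
        using y no_private upper.layer(4) by auto
    qed
  qed
  then have same: "nbh E S' u = nbh E S' w"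
    using upper.core_not_dominated[OF uw(1) upper.core_in[OF uw(2)]] core(2) by blast
  obtain y where y: "y \<in> S'" "(w, y) \<notin> E"
    using undominated by blast
  then have "y \<notin> S''"
    using core uw upper.core_in upper.loop by auto
  then have "y \<in> X1"
    using y(1) upper.layer(4) by blast
  then obtain v where v: "v \<in> S''" "nbh E S' y \<subset> nbh E S' v"
    using upper.corner_dominated by blast
  have "y \<in> nbh E S' y"
    using y(1) upper.loop by simp
  then have "(v, y) \<in> E"
    using v(2) by auto
  moreover have "(u, y) \<notin> E"
    using same y by auto
  ultimately show False
    using v(1) y(2) core(1) by auto
qed

lemma doubled_path_twins_over_edge:
  assumes core: "S'' = {p, q}" "p \<noteq> q" "(p, q) \<in> E"
    and undominated: "\<forall>v\<in>S''. \<exists>u\<in>S'. (v, u) \<notin> E"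
    and two: "card X0 \<le> 2" and three: "card X1 = 3" and J: "J = l - 1"
  shows "\<exists>pos. doubled_path E S (l - 2) (l + 3) J pos"
proof -
  have qp: "(q, p) \<in> E"
    using edge_sym core(3) .
  obtain xp where xp: "xp \<in> X1" "(p, xp) \<in> E" "(q, xp) \<notin> E"
    using private_corner_over_edge[OF core] undominated core(1) by blast
  obtain xq where xq: "xq \<in> X1" "(q, xq) \<in> E" "(p, xq) \<notin> E"
    using private_corner_over_edge[of q p] core qp undominated by (auto simp: insert_commute)
  have loops_pq: "(p, p) \<in> E" "(q, q) \<in> E"
    using core(1) upper.core_in upper.loop by auto
  interpret twins: twin_layers E S S' X0 S'' X1 p q q p xp xq
    by unfold_locales (use core qp xp xq loops_pq two three in auto)
  have "doubled_path E S'' l (l + 1) J (\<lambda>v. if v = p then l else l + 1)"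
    unfolding core(1) using loops_pq core(2,3) qp J by (intro doubled_path_edge) auto
  moreover have "{w\<in>S''. (if w = p then l else l + 1) = l} = {p}"
    "{w\<in>S''. (if w = p then l else l + 1) = l + 1} = {q}"
    using core by auto
  ultimately have "\<exists>pos. doubled_path E S (l - 2) (l + 1 + 2) J pos"
    using J by (intro twins.doubled_path_grows) auto
  then show ?thesis
    by (simp add: add.assoc)
qed

lemma doubled_path_twins_over_path:
  assumes P: "doubled_path E S'' lo hi J pos" and J: "J = lo - 1" and wide: "lo + 2 \<le> hi"
    and three: "card X1 = 3" and two: "card X0 \<le> 2"
  shows "\<exists>pos'. doubled_path E S (lo - 2) (hi + 2) J pos'"
proof -
  have R: "doubled_path E S'' lo hi J (\<lambda>v. lo + hi - pos v)"
    using doubled_path_move_twins[OF doubled_path_reflect[OF P]] J wide by auto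
  obtain p where p: "{w\<in>S''. pos w = lo} = {p}"
    using doubled_path_singleton_fibre[OF P, of lo] J wide by auto
  obtain q where q: "{w\<in>S''. pos w = hi} = {q}"
    using doubled_path_singleton_fibre[OF P, of hi] J wide by auto
  obtain p' where p': "{w\<in>S''. pos w = lo + 1} = {p'}"
    using doubled_path_singleton_fibre[OF P, of "lo + 1"] J wide by auto
  obtain q' where q': "{w\<in>S''. pos w = hi - 1} = {q'}"
    using doubled_path_singleton_fibre[OF P, of "hi - 1"] J wide by auto
  have pos: "p \<in> S''" "pos p = lo" "q \<in> S''" "pos q = hi" "p' \<in> S''" "pos p' = lo + 1"
    "q' \<in> S''" "pos q' = hi - 1"
    using p q p' q' by auto
  have rq: "{w\<in>S''. lo + hi - pos w = lo} = {q}" "{w\<in>S''. lo + hi - pos w = lo + 1} = {q'}"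
    using q q' by auto
  have nbh_p: "nbh E S'' p = {p, p'}"
    using doubled_path_nbh_end[OF P p] p' by simp
  have nbh_q: "nbh E S'' q = {q, q'}"
    using doubled_path_nbh_end[OF R rq(1)] rq(2) by simp
  have "p' \<noteq> p" "nbh E S'' p \<subset> nbh E S'' p'"
    using doubled_path_end_dominated[OF P pos(1,2,5,6) wide] by auto
  then obtain xp where xp: "xp \<in> X1" "(p, xp) \<in> E" "(p', xp) \<notin> E"
    using upper.private_neighbour pos(1,5) by blast
  have "q' \<noteq> q" "nbh E S'' q \<subset> nbh E S'' q'"
    using doubled_path_end_dominated[OF R pos(3) _ pos(7) _ wide] pos(4,8) by auto
  then obtain xq where xq: "xq \<in> X1" "(q, xq) \<in> E" "(q', xq) \<notin> E"
    using upper.private_neighbour pos(3,7) by blast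
  \<comment> \<open>A corner of \<open>S'\<close> seen by both ends would be dominated by a vertex next to both ends,
    which exists only on a path of three vertices and is then \<open>p' = q'\<close>.\<close>
  have one_end: "(x, v) \<in> E" if x: "x \<in> X1" "(p, x) \<in> E" "(q, x) \<in> E" and v: "v = p' \<or> v = q'" for x v
  proof -
    obtain w where w: "w \<in> S''" "nbh E S' x \<subset> nbh E S' w"
      using upper.corner_dominated[OF x(1)] by blast
    have "p \<in> nbh E S' x" "q \<in> nbh E S' x" "x \<in> nbh E S' x"
      using x pos(1,3) upper.core_in upper.corner_in upper.loop edge_sym by auto
    then have wE: "(w, p) \<in> E" "(w, q) \<in> E" "(w, x) \<in> E"
      using w(2) by auto
    then have "pos w = lo + 1" "hi = lo + 2"
      using doubled_path_adj[OF P w(1) pos(1)] doubled_path_adj[OF P w(1) pos(3)] pos(2,4) wide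
      by auto
    then have "w = p'" "w = q'"
      using p' q' w(1) by auto
    then show ?thesis
      using v wE(3) edge_sym by auto
  qed
  have "(q, xp) \<notin> E" "(p, xq) \<notin> E"
    using one_end[of xp p'] one_end[of xq q'] xp xq edge_sym by blast+
  interpret twins: twin_layers E S S' X0 S'' X1 p q p' q' xp xq
    by unfold_locales (use pos nbh_p nbh_q xp xq \<open>(q, xp) \<notin> E\<close> \<open>(p, xq) \<notin> E\<close> three two wide in auto)
  show ?thesis
    using twins.doubled_path_grows[OF P J _ p q] wide by auto
qed

end

section \<open>Doubled paths in a corner ranking\<close>

lemma corner_layer_remaining:
  assumes G: "graph V E" and cw: "cop_win V E" and k: "Suc k < corner_rank V E"
  shows "corner_layer E (remaining V E k) (remaining V E (Suc k)) (strict_corners E (remaining V E k))"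
proof
  show "sym E" "\<forall>v\<in>remaining V E k. (v, v) \<in> E" "finite (remaining V E k)"
    using G remaining_subset[of V E k] finite_subset unfolding graph_def by blast+
qed (simp_all add: remaining_Suc_below_top[OF cw k])

lemma two_corner_layers_remaining:
  assumes G: "graph V E" and cw: "cop_win V E" and k: "Suc (Suc k) < corner_rank V E"
  shows "two_corner_layers E (remaining V E k) (remaining V E (Suc k)) (strict_corners E (remaining V E k))
    (remaining V E (Suc (Suc k))) (strict_corners E (remaining V E (Suc k)))"
  using corner_layer_remaining[OF G cw] k remaining_Suc_below_top[OF cw k]
  by (intro two_corner_layers.intro two_corner_layers_axioms.intro) auto

lemma doubled_path_peel_ends:
  assumes G: "graph V E" and cw: "cop_win V E" and k: "Suc k < corner_rank V E"
    and two: "card (strict_corners E (remaining V E k)) \<le> 2"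
    and P: "doubled_path E (remaining V E (Suc k)) lo hi J pos" and wide: "lo + 2 \<le> hi"
    and J: "J \<noteq> lo - 1" "J \<noteq> lo" "J \<noteq> hi" "J \<noteq> hi + 1" "hi = lo + 2 \<longrightarrow> J \<noteq> lo + 1"
  shows "\<exists>pos'. doubled_path E (remaining V E k) (lo - 1) (hi + 1) J pos'"
proof -
  interpret corner_layer E "remaining V E k" "remaining V E (Suc k)" "strict_corners E (remaining V E k)"
    by (rule corner_layer_remaining[OF G cw k])
  show ?thesis
    using doubled_path_grows_by_ends[OF P wide J two] by blast
qed

lemma doubled_path_peel_twins:
  assumes G: "graph V E" and cw: "cop_win V E" and k: "Suc (Suc k) < corner_rank V E"
    and two: "card (strict_corners E (remaining V E k)) \<le> 2"
    and three: "card (strict_corners E (remaining V E (Suc k))) = 3"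
    and P: "doubled_path E (remaining V E (Suc (Suc k))) lo hi J pos" and J: "J = lo - 1"
    and wide: "lo + 2 \<le> hi"
  shows "\<exists>pos'. doubled_path E (remaining V E k) (lo - 2) (hi + 2) J pos'"
proof -
  interpret two_corner_layers E "remaining V E k" "remaining V E (Suc k)"
    "strict_corners E (remaining V E k)" "remaining V E (Suc (Suc k))"
    "strict_corners E (remaining V E (Suc k))"
    by (rule two_corner_layers_remaining[OF G cw k])
  show ?thesis
    by (rule doubled_path_twins_over_path[OF P J wide three two])
qed

lemma doubled_path_peel_over_vertex:
  assumes G: "graph V E" and cw: "cop_win V E" and k: "Suc k < corner_rank V E"
    and remnant: "remaining V E (Suc k) = {c}" and two: "card (strict_corners E (remaining V E k)) = 2"
    and J: "J \<noteq> l - 1" "J \<noteq> l" "J \<noteq> l + 1"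
  shows "\<exists>pos. doubled_path E (remaining V E k) (l - 1) (l + 1) J pos"
proof -
  interpret corner_layer E "remaining V E k" "remaining V E (Suc k)" "strict_corners E (remaining V E k)"
    by (rule corner_layer_remaining[OF G cw k])
  show ?thesis
    by (rule doubled_path_over_vertex[OF remnant two J])
qed

lemma doubled_path_peel_twins_over_vertex:
  assumes G: "graph V E" and cw: "cop_win V E" and k: "Suc (Suc k) < corner_rank V E"
    and remnant: "remaining V E (Suc (Suc k)) = {c}"
    and two: "card (strict_corners E (remaining V E k)) = 2"
    and three: "card (strict_corners E (remaining V E (Suc k))) = 3" and J: "J = l - 1"
  shows "\<exists>pos. doubled_path E (remaining V E k) (l - 2) (l + 2) J pos"
proof -
  interpret two_corner_layers E "remaining V E k" "remaining V E (Suc k)"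
    "strict_corners E (remaining V E k)" "remaining V E (Suc (Suc k))"
    "strict_corners E (remaining V E (Suc k))"
    by (rule two_corner_layers_remaining[OF G cw k])
  show ?thesis
    by (rule doubled_path_twins_over_vertex[OF remnant two three J])
qed

lemma doubled_path_peel_over_clique:
  assumes G: "graph V E" and cw: "cop_win V E" and k: "Suc k < corner_rank V E"
    and clique: "is_clique E (remaining V E (Suc k))"
    and undominated: "\<forall>v\<in>remaining V E (Suc k). \<exists>u\<in>remaining V E k. (v, u) \<notin> E"
    and two: "card (strict_corners E (remaining V E k)) = 2"
    and size: "card (remaining V E (Suc k)) = (if J = lo then 2 else 1) + (if J = lo + 1 then 2 else 1)"
    and J: "J \<noteq> lo - 1" "J \<noteq> lo + 2"
  shows "\<exists>pos. doubled_path E (remaining V E k) (lo - 1) (lo + 2) J pos"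
proof -
  interpret corner_layer E "remaining V E k" "remaining V E (Suc k)" "strict_corners E (remaining V E k)"
    by (rule corner_layer_remaining[OF G cw k])
  show ?thesis
    by (rule doubled_path_over_clique[OF clique undominated two size J])
qed

lemma doubled_path_peel_twins_over_edge:
  assumes G: "graph V E" and cw: "cop_win V E" and k: "Suc (Suc k) < corner_rank V E"
    and remnant: "remaining V E (Suc (Suc k)) = {p, q}" "p \<noteq> q" "(p, q) \<in> E"
    and undominated: "\<forall>v\<in>remaining V E (Suc (Suc k)). \<exists>u\<in>remaining V E (Suc k). (v, u) \<notin> E"
    and two: "card (strict_corners E (remaining V E k)) \<le> 2"
    and three: "card (strict_corners E (remaining V E (Suc k))) = 3" and J: "J = l - 1"
  shows "\<exists>pos. doubled_path E (remaining V E k) (l - 2) (l + 3) J pos"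
proof -
  interpret two_corner_layers E "remaining V E k" "remaining V E (Suc k)"
    "strict_corners E (remaining V E k)" "remaining V E (Suc (Suc k))"
    "strict_corners E (remaining V E (Suc k))"
    by (rule two_corner_layers_remaining[OF G cw k])
  show ?thesis
    by (rule doubled_path_twins_over_edge[OF remnant undominated two three J])
qed

text \<open>Induction downwards from level \<open>m + s\<close>: each rank of two vertices adds one position at
  each end, and the rank \<open>j + s\<close> of three vertices, together with the rank below it, adds two.\<close>

lemma doubled_path_descent:
  assumes G: "graph V E" and cw: "cop_win V E" and top_rank: "m + s < corner_rank V E"
    and levels: "\<And>k. s \<le> k \<Longrightarrow> k < m + s \<Longrightarrow>
      card (strict_corners E (remaining V E k)) = (if Suc k = j + s then 3 else 2)"
    and j: "1 < j" "j \<noteq> m + 1" "2 * int j \<le> n" and wide: "2 * int m + 3 \<le> n"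
    and top: "doubled_path E (remaining V E (m + s)) (int m + 1) (n - int m) (int j) pos"
  shows "\<exists>pos. doubled_path E (remaining V E s) 1 n (int j) pos"
proof -
  define Q where "Q k \<longleftrightarrow> (\<exists>pos. doubled_path E (remaining V E (k + s)) (int k + 1) (n - int k) (int j) pos)"
    for k
  have "Q k" if "k \<le> m" "k + 1 \<noteq> j" for k
    using that
  proof (induction "m - k" arbitrary: k rule: less_induct)
    case less
    show ?case
    proof (cases "k = m")
      case True
      then show ?thesis
        using top unfolding Q_def by blast
    next
      case False
      show ?thesis
      proof (cases "k + 2 = j")
        case True
        have "k + 2 \<le> m"
          using True \<open>k \<noteq> m\<close> less.prems(1) j(2) by linarith
        moreover have "m - (k + 2) < m - k"
          using \<open>k + 2 \<le> m\<close> by simp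
        ultimately have "Q (k + 2)"
          using less.hyps[of "k + 2"] True by simp
        then obtain pos where "doubled_path E (remaining V E (k + 2 + s)) (int (k + 2) + 1)
            (n - int (k + 2)) (int j) pos"
          unfolding Q_def by blast
        then have "\<exists>pos'. doubled_path E (remaining V E (k + s)) (int (k + 2) + 1 - 2)
            (n - int (k + 2) + 2) (int j) pos'"
          using True \<open>k + 2 \<le> m\<close> j wide levels[of "k + s"] levels[of "Suc (k + s)"] top_rank
          by (intro doubled_path_peel_twins[OF G cw]) (auto simp: numeral_2_eq_2)
        then show ?thesis
          unfolding Q_def by (simp add: algebra_simps)
      next
        case False
        have "m - (k + 1) < m - k" "k + 1 \<le> m"
          using \<open>k \<noteq> m\<close> less.prems(1) by auto
        then have "Q (k + 1)"
          using less.hyps[of "k + 1"] False by simp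
        then obtain pos where "doubled_path E (remaining V E (Suc (k + s))) (int (k + 1) + 1)
            (n - int (k + 1)) (int j) pos"
          unfolding Q_def by auto
        then have "\<exists>pos'. doubled_path E (remaining V E (k + s)) (int (k + 1) + 1 - 1)
            (n - int (k + 1) + 1) (int j) pos'"
          using False \<open>k \<noteq> m\<close> less.prems j wide levels[of "k + s"] top_rank
          by (intro doubled_path_peel_ends[OF G cw]) auto
        then show ?thesis
          unfolding Q_def by (simp add: algebra_simps)
      qed
    qed
  qed
  then have "Q 0"
    using j by simp
  then show ?thesis
    unfolding Q_def by simp
qed

lemma card_corners_from_levels:
  assumes levels: "\<And>i. 1 \<le> i \<Longrightarrow> i \<le> \<alpha> \<Longrightarrow> card (rank_set V E (i + s)) = (if i = j then 3 else 2)"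
    and k: "s \<le> k" "k < \<alpha> + s" "Suc k < corner_rank V E"
  shows "card (strict_corners E (remaining V E k)) = (if Suc k = j + s then 3 else 2)"
proof -
  have "rank_set V E (Suc k - s + s) = strict_corners E (remaining V E k)"
    using rank_set_below_top[of "Suc k" V E] k by simp
  moreover have "(Suc k - s = j) = (Suc k = j + s)"
    using k by auto
  ultimately show ?thesis
    using levels[of "Suc k - s"] k by simp
qed

lemma doubled_path_below_vertex_top:
  assumes G: "graph V E" and cw: "cop_win V E" and cr: "corner_rank V E = \<alpha> + 1 + s"
    and \<alpha>: "2 \<le> \<alpha>" and j: "1 < j" "j \<le> \<alpha>"
    and levels: "\<And>i. 1 \<le> i \<Longrightarrow> i \<le> \<alpha> \<Longrightarrow> card (rank_set V E (i + s)) = (if i = j then 3 else 2)"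
    and top: "card (rank_set V E (\<alpha> + 1 + s)) = 1"
  shows "\<exists>pos. doubled_path E (remaining V E s) 1 (2 * int \<alpha> + 1) (int j) pos"
proof -
  have corner_card: "card (strict_corners E (remaining V E k)) = (if Suc k = j + s then 3 else 2)"
    if "s \<le> k" "k < \<alpha> + s" for k
    by (rule card_corners_from_levels[OF levels]) (use that cr in auto)
  obtain c where c: "remaining V E (\<alpha> + s) = {c}"
    using top rank_set_top[of V E] cr card_1_singletonE by auto
  show ?thesis
  proof (cases "j = \<alpha>")
    case True
    have "Suc (Suc (\<alpha> - 2 + s)) = \<alpha> + s"
      using \<alpha> by simp
    then have "\<exists>pos. doubled_path E (remaining V E (\<alpha> - 2 + s)) (int \<alpha> + 1 - 2) (int \<alpha> + 1 + 2)
        (int j) pos"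
      using True \<alpha> c cr corner_card[of "\<alpha> - 2 + s"] corner_card[of "Suc (\<alpha> - 2 + s)"]
      by (intro doubled_path_peel_twins_over_vertex[OF G cw]) auto
    then obtain pos where "doubled_path E (remaining V E (\<alpha> - 2 + s)) (int (\<alpha> - 2) + 1)
        (2 * int \<alpha> + 1 - int (\<alpha> - 2)) (int j) pos"
      using \<alpha> by (auto simp: of_nat_diff algebra_simps)
    then show ?thesis
      using True \<alpha> j corner_card cr by (intro doubled_path_descent[OF G cw, where m = "\<alpha> - 2"]) auto
  next
    case False
    have "Suc (\<alpha> - 1 + s) = \<alpha> + s"
      using \<alpha> by simp
    then have "\<exists>pos. doubled_path E (remaining V E (\<alpha> - 1 + s)) (int \<alpha> + 1 - 1) (int \<alpha> + 1 + 1)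
        (int j) pos"
      using False \<alpha> j c cr corner_card[of "\<alpha> - 1 + s"]
      by (intro doubled_path_peel_over_vertex[OF G cw]) auto
    then obtain pos where "doubled_path E (remaining V E (\<alpha> - 1 + s)) (int (\<alpha> - 1) + 1)
        (2 * int \<alpha> + 1 - int (\<alpha> - 1)) (int j) pos"
      using \<alpha> by (auto simp: of_nat_diff algebra_simps)
    then show ?thesis
      using False \<alpha> j corner_card cr by (intro doubled_path_descent[OF G cw, where m = "\<alpha> - 1"]) auto
  qed
qed

lemma doubled_path_below_clique_top:
  assumes G: "graph V E" and cw: "cop_win V E" and cr: "corner_rank V E = \<alpha> + s"
    and \<alpha>: "2 \<le> \<alpha>" and j: "1 < j" "j \<le> \<alpha>"
    and levels: "\<And>i. 1 \<le> i \<Longrightarrow> i \<le> \<alpha> \<Longrightarrow> card (rank_set V E (i + s)) = (if i = j then 3 else 2)"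
    and undominated: "\<forall>v\<in>rank_set V E (\<alpha> + s). \<exists>u\<in>remaining V E (\<alpha> + s - 2). (v, u) \<notin> E"
  shows "\<exists>pos. doubled_path E (remaining V E s) 1 (2 * int \<alpha>) (int j) pos"
proof -
  have corner_card: "card (strict_corners E (remaining V E k)) = (if Suc k = j + s then 3 else 2)"
    if "s \<le> k" "Suc k < \<alpha> + s" for k
    by (rule card_corners_from_levels[OF levels]) (use that cr in auto)
  define T where "T = remaining V E (\<alpha> - 1 + s)"
  have T: "T = rank_set V E (\<alpha> + s)"
    unfolding T_def using rank_set_top[of V E] cr \<alpha> by (simp add: algebra_simps)
  have clique: "is_clique E T"
    using cop_win_clique_at_top[OF cw] cr \<alpha> unfolding T_def by (simp add: algebra_simps)
  have card_T: "card T = (if \<alpha> = j then 3 else 2)"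
    using levels[of \<alpha>] \<alpha> T by simp
  have T_undominated: "\<forall>v\<in>T. \<exists>u\<in>remaining V E (\<alpha> - 2 + s). (v, u) \<notin> E"
    using undominated T \<alpha> by (simp add: algebra_simps)
  show ?thesis
  proof (cases "j = \<alpha> - 1")
    case True
    have k: "Suc (Suc (\<alpha> - 3 + s)) = \<alpha> - 1 + s" "Suc (\<alpha> - 3 + s) = \<alpha> - 2 + s"
      "Suc (\<alpha> - 2 + s) = \<alpha> - 1 + s"
      using True j by auto
    have "card T = 2"
      using card_T True \<alpha> by simp
    then obtain p q where pq: "T = {p, q}" "p \<noteq> q"
      by (auto simp: card_2_iff)
    have "(p, q) \<in> E"
      using clique pq(1) unfolding is_clique_def by blast
    then have "\<exists>pos. doubled_path E (remaining V E (\<alpha> - 3 + s)) (int \<alpha> - 2) (int \<alpha> + 3) (int j) pos"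
      using pq T_undominated True j cr corner_card[of "\<alpha> - 3 + s"] corner_card[of "Suc (\<alpha> - 3 + s)"]
      unfolding T_def k(2,3)[symmetric]
      by (intro doubled_path_peel_twins_over_edge[OF G cw]) auto
    then obtain pos where "doubled_path E (remaining V E (\<alpha> - 3 + s)) (int (\<alpha> - 3) + 1)
        (2 * int \<alpha> - int (\<alpha> - 3)) (int j) pos"
      using True j by (auto simp: of_nat_diff algebra_simps)
    then show ?thesis
      using True \<alpha> j corner_card cr by (intro doubled_path_descent[OF G cw, where m = "\<alpha> - 3"]) auto
  next
    case False
    have k: "Suc (\<alpha> - 2 + s) = \<alpha> - 1 + s"
      using \<alpha> by simp
    have "\<exists>pos. doubled_path E (remaining V E (\<alpha> - 2 + s)) (int \<alpha> - 1) (int \<alpha> + 2) (int j) pos"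
      using clique T_undominated card_T False j \<alpha> cr corner_card[of "\<alpha> - 2 + s"]
      unfolding T_def k[symmetric]
      by (intro doubled_path_peel_over_clique[OF G cw]) auto
    then obtain pos where "doubled_path E (remaining V E (\<alpha> - 2 + s)) (int (\<alpha> - 2) + 1)
        (2 * int \<alpha> - int (\<alpha> - 2)) (int j) pos"
      using \<alpha> by (auto simp: of_nat_diff algebra_simps)
    then show ?thesis
      using False \<alpha> j corner_card cr by (intro doubled_path_descent[OF G cw, where m = "\<alpha> - 2"]) auto
  qed
qed

lemma corner_rank_pos: "1 \<le> corner_rank V E"
  by (simp add: corner_rank_def)

lemma card_rank_set_top_from_vector:
  "rank_card_vector V E = y # ys \<Longrightarrow> card (rank_set V E (corner_rank V E)) = y"
  using rank_card_vector_nth[OF corner_rank_pos order.refl, of V E] by simp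

lemma card_rank_set_bottom_from_vector:
  assumes "rank_card_vector V E = ys @ [y]"
  shows "card (rank_set V E 1) = y"
proof -
  have "corner_rank V E = Suc (length ys)"
    using assms length_rank_card_vector[of V E] by simp
  then show ?thesis
    using rank_card_vector_nth[OF order.refl corner_rank_pos, of V E] assms by simp
qed

lemma undominated_top_of_type0:
  "type0 V E \<Longrightarrow> \<forall>v\<in>rank_set V E (corner_rank V E). \<exists>u\<in>remaining V E (corner_rank V E - 2). (v, u) \<notin> E"
  unfolding type0_def type1_def by blast

text \<open>Each end of the path needs a corner of its own in rank 1.\<close>

lemma no_single_bottom_corner:
  assumes G: "graph V E" and cw: "cop_win V E" and cr: "2 \<le> corner_rank V E"
    and bottom: "card (rank_set V E 1) = 1"
    and P: "doubled_path E (remaining V E 1) 1 hi J pos" and hi: "4 \<le> hi" and J: "1 < J" "J < hi"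
  shows False
proof -
  interpret corner_layer E V "remaining V E 1" "strict_corners E V"
    using corner_layer_remaining[OF G cw, of 0] cr by simp
  have "card (strict_corners E V) = 1"
    using bottom rank_set_below_top[of 1 V E] cr by simp
  moreover have "card (strict_corners E V) = 2"
    using conjunct1[OF doubled_path_grows_by_ends[OF P]] hi J \<open>card (strict_corners E V) = 1\<close> by auto
  ultimately show False
    by simp
qed

context twin_rank_vector
begin

lemma realizes_doubled_path:
  assumes r: "realizes V E (1 # vec_of \<alpha> x @ zs)" and zs: "length zs = s"
  shows "\<exists>pos. doubled_path E (remaining V E s) 1 (2 * int \<alpha> + 1) (int j) pos"
proof -
  have G: "graph V E" and cw: "cop_win V E" and rv: "rank_card_vector V E = [1] @ vec_of \<alpha> x @ zs"
    using r by (auto simp: realizes_def)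
  have cr: "corner_rank V E = \<alpha> + 1 + s"
    using length_rank_card_vector[of V E] rv zs by simp
  show ?thesis
    using card_rank_set_from_vector[OF rv] card_rank_set_top_from_vector[of V E] rv x zs cr two_le_alpha j
    by (intro doubled_path_below_vertex_top[OF G cw cr]) auto
qed

lemma zero_realizes_doubled_path:
  assumes r: "zero_realizes V E (vec_of \<alpha> x @ zs)" and zs: "length zs = s"
  shows "\<exists>pos. doubled_path E (remaining V E s) 1 (2 * int \<alpha>) (int j) pos"
proof -
  have G: "graph V E" and cw: "cop_win V E" and rv: "rank_card_vector V E = [] @ vec_of \<alpha> x @ zs"
    and t0: "type0 V E"
    using r by (auto simp: zero_realizes_def realizes_def)
  have cr: "corner_rank V E = \<alpha> + s"
    using length_rank_card_vector[of V E] rv zs by simp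
  show ?thesis
    using card_rank_set_from_vector[OF rv] undominated_top_of_type0[OF t0] x zs cr two_le_alpha j
    by (intro doubled_path_below_clique_top[OF G cw cr]) auto
qed

lemma realizes_unique:
  assumes "realizes V1 E1 (1 # vec_of \<alpha> x)" "realizes V2 E2 (1 # vec_of \<alpha> x)"
  shows "graph_iso V1 E1 V2 E2"
proof -
  obtain p1 where "doubled_path E1 V1 1 (2 * int \<alpha> + 1) (int j) p1"
    using realizes_doubled_path[of V1 E1 "[]" 0] assms(1) by auto
  moreover obtain p2 where "doubled_path E2 V2 1 (2 * int \<alpha> + 1) (int j) p2"
    using realizes_doubled_path[of V2 E2 "[]" 0] assms(2) by auto
  ultimately show ?thesis
    by (rule doubled_path_iso)
qed

lemma zero_realizes_unique:
  assumes "zero_realizes V1 E1 (vec_of \<alpha> x)" "zero_realizes V2 E2 (vec_of \<alpha> x)"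
  shows "graph_iso V1 E1 V2 E2"
proof -
  obtain p1 where "doubled_path E1 V1 1 (2 * int \<alpha>) (int j) p1"
    using zero_realizes_doubled_path[of V1 E1 "[]" 0] assms(1) by auto
  moreover obtain p2 where "doubled_path E2 V2 1 (2 * int \<alpha>) (int j) p2"
    using zero_realizes_doubled_path[of V2 E2 "[]" 0] assms(2) by auto
  ultimately show ?thesis
    by (rule doubled_path_iso)
qed

lemma not_realizes_with_bottom_one: "\<not> realizes V E (1 # vec_of \<alpha> x @ [1])"
proof
  assume r: "realizes V E (1 # vec_of \<alpha> x @ [1])"
  then obtain pos where P: "doubled_path E (remaining V E 1) 1 (2 * int \<alpha> + 1) (int j) pos"
    using realizes_doubled_path[OF r] by auto
  have rv: "rank_card_vector V E = (1 # vec_of \<alpha> x) @ [1]"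
    using r by (simp add: realizes_def)
  show False
  proof (rule no_single_bottom_corner[OF _ _ _ card_rank_set_bottom_from_vector[OF rv] P])
    show "graph V E" "cop_win V E"
      using r by (simp_all add: realizes_def)
    show "2 \<le> corner_rank V E"
      using rv length_rank_card_vector[of V E] two_le_alpha by simp
  qed (use two_le_alpha j in auto)
qed

lemma not_zero_realizes_with_bottom_one: "\<not> zero_realizes V E (vec_of \<alpha> x @ [1])"
proof
  assume r: "zero_realizes V E (vec_of \<alpha> x @ [1])"
  then obtain pos where P: "doubled_path E (remaining V E 1) 1 (2 * int \<alpha>) (int j) pos"
    using zero_realizes_doubled_path[OF r] by auto
  have rv: "rank_card_vector V E = vec_of \<alpha> x @ [1]"
    using r by (simp add: zero_realizes_def realizes_def)
  show False
  proof (rule no_single_bottom_corner[OF _ _ _ card_rank_set_bottom_from_vector[OF rv] P])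
    show "graph V E" "cop_win V E"
      using r by (simp_all add: zero_realizes_def realizes_def)
    show "2 \<le> corner_rank V E"
      using rv length_rank_card_vector[of V E] two_le_alpha by simp
  qed (use two_le_alpha j in auto)
qed

end

theorem lemma5p1:
  fixes \<alpha> j :: nat and x :: "nat \<Rightarrow> nat"
  assumes "\<alpha> \<ge> 2"
    and "1 < j" and "j \<le> \<alpha>" and "x j = 3"
    and "\<forall>i\<in>{1..\<alpha>}. i \<noteq> j \<longrightarrow> x i = 2"
  shows "((\<exists>(V::nat set) E. realizes V E (1 # vec_of \<alpha> x)) \<and>
          (\<forall>(V1::'a set) E1 (V2::'b set) E2.
              realizes V1 E1 (1 # vec_of \<alpha> x) \<longrightarrow> realizes V2 E2 (1 # vec_of \<alpha> x)
              \<longrightarrow> graph_iso V1 E1 V2 E2))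
       \<and> \<not> (\<exists>(V::'c set) E. realizes V E (1 # vec_of \<alpha> x @ [1]))
       \<and> ((\<exists>(V::nat set) E. zero_realizes V E (vec_of \<alpha> x)) \<and>
          (\<forall>(V1::'d set) E1 (V2::'e set) E2.
              zero_realizes V1 E1 (vec_of \<alpha> x) \<longrightarrow> zero_realizes V2 E2 (vec_of \<alpha> x)
              \<longrightarrow> graph_iso V1 E1 V2 E2))
       \<and> \<not> (\<exists>(V::'f set) E. zero_realizes V E (vec_of \<alpha> x @ [1]))"
proof -
  interpret twin_rank_vector \<alpha> j x
    using assms by unfold_locales auto
  show ?thesis
    by (meson realizes_twin_path zero_realizes_twin_path realizes_unique zero_realizes_unique
        not_realizes_with_bottom_one not_zero_realizes_with_bottom_one)
qed

end
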